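(* Let $G$ be a line graph. The following are equivalent: (i) $G$ has a $K_4$-immersion; (ii) $G$ has a $K_4$-minor; (iii) for every graph $H$ with $G=L(H)$, either $\Delta(H)\geq 4$ or $H$ contains two distinct cycles that share at least one edge, where at most one of these two cycles has length two.
   Context: Graphs are finite and may have parallel edges but no loops; a cycle of length two consists of two parallel edges; $\Delta(H)$ is the maximum degree of $H$ (counting parallel edges with multiplicity). A line graph is a graph of the form $L(H)$, the simple graph with vertex set $E(H)$ in which two distinct edges of $H$ are adjacent iff they share at least one endpoint. A graph $G$ has a $K_t$-immersion if there is an injective map $\phi$ from the vertex set of $K_t$ to $V(G)$ and, for each pair $u\neq v$ of vertices of $K_t$, a path in $G$ joining $\phi(u)$ and $\phi(v)$, such that these paths are pairwise edge-disjoint. $G$ has a $K_t$-minor if $K_t$ can be obtained from a subgraph of $G$ by contracting edges. *)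

theory Defs
  imports Main
begin

definition simple_graph :: "'a set \<Rightarrow> 'a set set \<Rightarrow> bool" where
  "simple_graph V E \<longleftrightarrow> finite V \<and> (\<forall>e\<in>E. e \<subseteq> V \<and> card e = 2)"

definition is_path :: "'a set set \<Rightarrow> 'a list \<Rightarrow> 'a \<Rightarrow> 'a \<Rightarrow> bool" where
  "is_path E p a b \<longleftrightarrow> p \<noteq> [] \<and> hd p = a \<and> last p = b \<and> distinct p \<and>
     (\<forall>i. Suc i < length p \<longrightarrow> {p ! i, p ! Suc i} \<in> E)"

definition path_edges :: "'a list \<Rightarrow> 'a set set" where
  "path_edges p = {{p ! i, p ! Suc i} | i. Suc i < length p}"

definition has_Kt_immersion :: "nat \<Rightarrow> 'a set \<Rightarrow> 'a set set \<Rightarrow> bool" where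
  "has_Kt_immersion t V E \<longleftrightarrow>
     (\<exists>(\<phi> :: nat \<Rightarrow> 'a) (P :: nat \<Rightarrow> nat \<Rightarrow> 'a list).
        inj_on \<phi> {..<t} \<and> \<phi> ` {..<t} \<subseteq> V \<and>
        (\<forall>i j. i < j \<and> j < t \<longrightarrow> is_path E (P i j) (\<phi> i) (\<phi> j)) \<and>
        (\<forall>i j i' j'. i < j \<and> j < t \<and> i' < j' \<and> j' < t \<and> (i, j) \<noteq> (i', j') \<longrightarrow>
            path_edges (P i j) \<inter> path_edges (P i' j') = {}))"

definition connected_in :: "'a set set \<Rightarrow> 'a set \<Rightarrow> bool" where
  "connected_in E B \<longleftrightarrow>
     (\<forall>x\<in>B. \<forall>y\<in>B. (\<lambda>u v. u \<in> B \<and> v \<in> B \<and> {u, v} \<in> E)\<^sup>*\<^sup>* x y)"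

text \<open>K_t-minor, via branch sets (standard equivalent of "obtained from a subgraph
  by contracting edges").\<close>

definition has_Kt_minor :: "nat \<Rightarrow> 'a set \<Rightarrow> 'a set set \<Rightarrow> bool" where
  "has_Kt_minor t V E \<longleftrightarrow>
     (\<exists>B :: nat \<Rightarrow> 'a set.
        (\<forall>i<t. B i \<noteq> {} \<and> B i \<subseteq> V \<and> connected_in E (B i)) \<and>
        (\<forall>i j. i < j \<and> j < t \<longrightarrow> B i \<inter> B j = {} \<and> (\<exists>x\<in>B i. \<exists>y\<in>B j. {x, y} \<in> E)))"

definition multigraph :: "'v set \<Rightarrow> 'e set \<Rightarrow> ('e \<Rightarrow> 'v set) \<Rightarrow> bool" where
  "multigraph VH EH ends \<longleftrightarrow> finite VH \<and> finite EH \<and>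
     (\<forall>e\<in>EH. ends e \<subseteq> VH \<and> card (ends e) = 2)"

definition mdegree :: "'v set \<Rightarrow> 'e set \<Rightarrow> ('e \<Rightarrow> 'v set) \<Rightarrow> 'v \<Rightarrow> nat" where
  "mdegree VH EH ends v = card {e \<in> EH. v \<in> ends e}"

definition max_degree :: "'v set \<Rightarrow> 'e set \<Rightarrow> ('e \<Rightarrow> 'v set) \<Rightarrow> nat" where
  "max_degree VH EH ends = Max (insert 0 (mdegree VH EH ends ` VH))"

text \<open>A cycle, identified with its edge set C: distinct vertices v_0..v_(k-1), distinct
  edges e_0..e_(k-1), k >= 2, e_i joins v_i and v_(i+1 mod k). Its length is card C.\<close>

definition is_cycle :: "'v set \<Rightarrow> 'e set \<Rightarrow> ('e \<Rightarrow> 'v set) \<Rightarrow> 'e set \<Rightarrow> bool" where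
  "is_cycle VH EH ends C \<longleftrightarrow>
     (\<exists>vs es. length vs = length es \<and> length vs \<ge> 2 \<and> distinct vs \<and> distinct es \<and>
        set es = C \<and> set vs \<subseteq> VH \<and> set es \<subseteq> EH \<and>
        (\<forall>i<length es. ends (es ! i) = {vs ! i, vs ! ((Suc i) mod length vs)}))"

definition line_edges :: "'e set \<Rightarrow> ('e \<Rightarrow> 'v set) \<Rightarrow> 'e set set" where
  "line_edges EH ends = {{e, f} | e f. e \<in> EH \<and> f \<in> EH \<and> e \<noteq> f \<and> ends e \<inter> ends f \<noteq> {}}"

text \<open>G = L(H) up to isomorphism: w.l.o.g. the edges of H are the vertices of G and the
  vertices of H are natural numbers (any finite vertex set can be relabelled into nat).\<close>

definition is_line_graph_of :: "'a set \<Rightarrow> 'a set set \<Rightarrow> nat set \<Rightarrow> ('a \<Rightarrow> nat set) \<Rightarrow> bool" where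
  "is_line_graph_of V E VH ends \<longleftrightarrow> multigraph VH V ends \<and> E = line_edges V ends"

definition is_line_graph :: "'a set \<Rightarrow> 'a set set \<Rightarrow> bool" where
  "is_line_graph V E \<longleftrightarrow> (\<exists>VH ends. is_line_graph_of V E VH ends)"

end

(* A K4-minor always yields a K4-immersion: join every two branch sets by an edge, link the three
   attachment vertices of each branch set to a common centre by edge-disjoint paths inside it, and
   glue these stars along the joining edges.

   In the line graph, four edges at a vertex of H form a K4; and if two distinct cycles of H share an
   edge and not both are digons, a cycle of length at least three together with an ear of the other
   cycle splits into four connected, pairwise adjacent sets of edges.

   Conversely, let H have maximum degree at most three, let any two distinct cycles sharing an edge be
   digons, and take a K4-immersion in L(H), a graph of maximum degree at most four. Counting edges at a
   vertex, a terminal lies on no path between two other terminals, and any other vertex on at most two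
   of the six paths. Hence the ends of a terminal stay connected without it, so it lies on a cycle D;
   every edge leaving D is a bridge, and all routes from D to a terminal off D leave D through one and
   the same non-terminal edge, which would lie on three paths. So the four terminals lie on D, and the
   path between two terminals separating the other two on D closes a second cycle through a third
   terminal, contradicting the hypothesis on cycles. *)

theory Submission
  imports Defs "HOL-Library.Transitive_Closure_Table"
begin

lemma path_edges_rev [simp]: "path_edges (rev p) = path_edges p"
proof -
  have "path_edges (rev p) \<subseteq> path_edges p" for p :: "'b list"
  proof
    fix f assume "f \<in> path_edges (rev p)"
    then obtain i where i: "Suc i < length p" "f = {rev p ! i, rev p ! Suc i}"
      unfolding path_edges_def by auto
    define j where "j = length p - 2 - i"
    have "rev p ! i = p ! Suc j" "rev p ! Suc i = p ! j" "Suc j < length p"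
      using i j_def by (simp_all add: rev_nth Suc_diff_Suc)
    then show "f \<in> path_edges p"
      unfolding path_edges_def using i by (auto simp: insert_commute)
  qed
  from this[of p] this[of "rev p"] show ?thesis by auto
qed

lemma is_path_rev:
  assumes "is_path E p a b"
  shows "is_path E (rev p) b a"
proof -
  have "{rev p ! i, rev p ! Suc i} \<in> E" if i: "Suc i < length p" for i
  proof -
    define j where "j = length p - 2 - i"
    have "rev p ! i = p ! Suc j" "rev p ! Suc i = p ! j" "Suc j < length p"
      using i j_def by (simp_all add: rev_nth Suc_diff_Suc)
    with assms show ?thesis unfolding is_path_def by (metis insert_commute)
  qed
  with assms show ?thesis unfolding is_path_def by (simp add: hd_rev last_rev)
qed

lemma path_edges_subset: "is_path E p a b \<Longrightarrow> path_edges p \<subseteq> E"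
  unfolding is_path_def path_edges_def by auto

lemma finite_path_edges: "finite (path_edges p)"
proof -
  have "path_edges p = (\<lambda>i. {p ! i, p ! Suc i}) ` {i. Suc i < length p}"
    unfolding path_edges_def by auto
  moreover have "finite {i. Suc i < length p}" by (rule finite_subset[of _ "{..<length p}"]) auto
  ultimately show ?thesis by simp
qed

lemma path_edgeE:
  assumes "distinct p" "f \<in> path_edges p"
  obtains u v where "f = {u, v}" "u \<noteq> v" "u \<in> set p" "v \<in> set p"
proof -
  obtain i where i: "Suc i < length p" "f = {p ! i, p ! Suc i}"
    using assms(2) unfolding path_edges_def by blast
  moreover have "p ! i \<noteq> p ! Suc i" using assms(1) i(1) by (simp add: nth_eq_iff_index_eq)
  ultimately show ?thesis using that by (metis Suc_lessD nth_mem)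
qed

lemma path_edges_disjoint:
  assumes "distinct p" "distinct q" "set p \<inter> set q \<subseteq> {c}"
  shows "path_edges p \<inter> path_edges q = {}"
proof (rule ccontr)
  assume "path_edges p \<inter> path_edges q \<noteq> {}"
  then obtain f where f: "f \<in> path_edges p" "f \<in> path_edges q" by blast
  obtain u v where uv: "f = {u, v}" "u \<noteq> v" "u \<in> set p" "v \<in> set p"
    using path_edgeE[OF assms(1) f(1)] .
  obtain u' v' where "f = {u', v'}" "u' \<in> set q" "v' \<in> set q"
    using path_edgeE[OF assms(2) f(2)] by metis
  then have "u \<in> set q" "v \<in> set q" using uv(1) by (auto simp: doubleton_eq_iff)
  then show False using uv assms(3) by blast
qed

lemma is_path_length_ge_2: "is_path E p a b \<Longrightarrow> a \<noteq> b \<Longrightarrow> 2 \<le> length p"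
  unfolding is_path_def
  by (metis One_nat_def Suc_1 hd_conv_nth last_conv_nth diff_Suc_1 le_less_linear less_2_cases
      length_0_conv)

lemma first_edge_in_path_edges:
  assumes "is_path E p a b" "2 \<le> length p"
  shows "{a, p ! 1} \<in> path_edges p"
proof -
  have "p ! 0 = a" using assms(1) unfolding is_path_def by (metis hd_conv_nth)
  then show ?thesis unfolding path_edges_def using assms(2) by (auto intro!: exI[of _ 0])
qed

lemma last_edge_in_path_edges:
  assumes "is_path E p a b" "2 \<le> length p"
  shows "{p ! (length p - 2), b} \<in> path_edges p"
proof -
  have "p ! (length p - 1) = b" using assms(1) unfolding is_path_def by (metis last_conv_nth)
  moreover have "Suc (length p - 2) = length p - 1" using assms(2) by simp
  ultimately show ?thesis unfolding path_edges_def using assms(2)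
    by (auto intro!: exI[of _ "length p - 2"])
qed

lemma interior_vertex_two_path_edges:
  assumes "is_path E p a b" "x \<in> set p" "x \<noteq> a" "x \<noteq> b"
  obtains f1 f2 where "f1 \<in> path_edges p" "f2 \<in> path_edges p" "f1 \<noteq> f2" "x \<in> f1" "x \<in> f2"
proof -
  have p: "p \<noteq> []" "hd p = a" "last p = b" "distinct p" using assms(1) unfolding is_path_def by auto
  obtain i where i: "i < length p" "p ! i = x" using assms(2) by (auto simp: in_set_conv_nth)
  have "i \<noteq> 0" using i p assms(3) by (metis hd_conv_nth)
  moreover have "i \<noteq> length p - 1" using i p assms(4) by (metis last_conv_nth)
  ultimately have i': "0 < i" "Suc i < length p" using i by auto
  have "{p ! (i - 1), p ! i} \<in> path_edges p"
    unfolding path_edges_def using i' by (auto intro!: exI[of _ "i - 1"])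
  moreover have "{p ! i, p ! Suc i} \<in> path_edges p"
    unfolding path_edges_def using i' by auto
  moreover have "p ! (i - 1) \<noteq> p ! Suc i" "p ! (i - 1) \<noteq> p ! i" "p ! i \<noteq> p ! Suc i"
    using p(4) i' by (simp_all add: nth_eq_iff_index_eq)
  then have "{p ! (i - 1), p ! i} \<noteq> {p ! i, p ! Suc i}" by (simp add: doubleton_eq_iff)
  ultimately show ?thesis using that i(2) by blast
qed

lemma is_path_tl:
  assumes "is_path E p a b" "2 \<le> length p"
  shows "is_path E (tl p) (p ! 1) b"
proof -
  obtain x y r where "p = x # y # r"
    using assms(2) by (metis One_nat_def Suc_1 Suc_le_length_iff)
  with assms(1) show ?thesis unfolding is_path_def by (auto simp: nth_tl)
qed

lemma is_path_take:
  assumes "is_path E p a b" "0 < n" "n \<le> length p"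
  shows "is_path E (take n p) a (p ! (n - 1))"
  using assms unfolding is_path_def by (auto simp: last_conv_nth hd_conv_nth min_def)

lemma is_path_drop:
  assumes "is_path E p a b" "n < length p"
  shows "is_path E (drop n p) (p ! n) b"
  using assms unfolding is_path_def by (auto simp: hd_drop_conv_nth)

lemma is_path_append:
  assumes p: "is_path E p x u" and q: "is_path E q v y"
    and disj: "set p \<inter> set q = {}" and uv: "{u, v} \<in> E"
  shows "is_path E (p @ q) x y"
proof -
  have "{(p @ q) ! i, (p @ q) ! Suc i} \<in> E" if i: "Suc i < length (p @ q)" for i
  proof (cases "Suc i < length p")
    case True
    with p show ?thesis unfolding is_path_def by (simp add: nth_append)
  next
    case False
    show ?thesis
    proof (cases "Suc i = length p")
      case True
      then have "i = length p - 1" by simp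
      then have "(p @ q) ! i = u" "(p @ q) ! Suc i = v"
        using p q unfolding is_path_def by (auto simp: nth_append last_conv_nth hd_conv_nth)
      with uv show ?thesis by simp
    next
      case False
      with \<open>\<not> Suc i < length p\<close> i have "Suc (i - length p) < length q" "length p \<le> i" by auto
      with q show ?thesis unfolding is_path_def by (auto simp: nth_append Suc_diff_le)
    qed
  qed
  with p q disj show ?thesis unfolding is_path_def by auto
qed

lemma path_edges_append_subset:
  assumes "p \<noteq> []" "q \<noteq> []"
  shows "path_edges (p @ q) \<subseteq> path_edges p \<union> path_edges q \<union> {{last p, hd q}}"
proof
  fix f assume "f \<in> path_edges (p @ q)"
  then obtain i where i: "Suc i < length (p @ q)" "f = {(p @ q) ! i, (p @ q) ! Suc i}"
    unfolding path_edges_def by blast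
  consider "Suc i < length p" | "Suc i = length p" | "length p < Suc i" by linarith
  then show "f \<in> path_edges p \<union> path_edges q \<union> {{last p, hd q}}"
  proof cases
    case 1
    then have "f \<in> path_edges p" using i unfolding path_edges_def by (auto simp: nth_append)
    then show ?thesis by blast
  next
    case 2
    then have "i = length p - 1" by simp
    then have "f = {last p, hd q}"
      using i assms by (simp add: nth_append last_conv_nth hd_conv_nth)
    then show ?thesis by blast
  next
    case 3
    then have "Suc (i - length p) < length q" "f = {q ! (i - length p), q ! Suc (i - length p)}"
      using i by (auto simp: nth_append Suc_diff_le)
    then have "f \<in> path_edges q" unfolding path_edges_def by blast
    then show ?thesis by blast
  qed
qed

lemma path_edges_append_rev_subset:
  assumes "p \<noteq> []" "q \<noteq> []"
  shows "path_edges (p @ rev q) \<subseteq> path_edges p \<union> path_edges q \<union> {{last p, last q}}"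
  using path_edges_append_subset[of p "rev q"] assms by (simp add: hd_rev)

lemma connected_in_path:
  assumes "connected_in E B" "x \<in> B" "y \<in> B"
  obtains p where "is_path E p x y" "set p \<subseteq> B"
proof -
  let ?R = "\<lambda>u v. u \<in> B \<and> v \<in> B \<and> {u, v} \<in> E"
  have "?R\<^sup>*\<^sup>* x y" using assms unfolding connected_in_def by blast
  then obtain xs0 where "rtrancl_path ?R x xs0 y" unfolding rtranclp_eq_rtrancl_path by blast
  then obtain xs where xs: "rtrancl_path ?R x xs y" "distinct (x # xs)"
    by (rule rtrancl_path_distinct)
  have step: "?R ((x # xs) ! i) ((x # xs) ! Suc i)" if "i < length xs" for i
    using rtrancl_path_nth[OF xs(1) that] by simp
  have "last (x # xs) = y"
    using xs(1) rtrancl_path_last[OF xs(1)] by (cases xs) (auto elim: rtrancl_path.cases)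
  then have "is_path E (x # xs) x y" unfolding is_path_def using step xs(2) by auto
  moreover have "set (x # xs) \<subseteq> B"
  proof
    fix u assume "u \<in> set (x # xs)"
    then obtain i where i: "i < Suc (length xs)" "(x # xs) ! i = u" by (metis in_set_conv_nth length_Cons)
    show "u \<in> B"
    proof (cases i)
      case 0
      then show ?thesis using i assms(2) by simp
    next
      case (Suc j)
      then show ?thesis using i step[of j] by auto
    qed
  qed
  ultimately show ?thesis using that by blast
qed

lemma is_path_until_first_hit:
  assumes q: "is_path E q z x" and "x \<in> S"
  obtains q' c where "is_path E q' z c" "c \<in> S" "set q' \<inter> S \<subseteq> {c}" "set q' \<subseteq> set q"
proof -
  have "q \<noteq> []" "last q = x" using q unfolding is_path_def by auto
  then have ex: "\<exists>r. r < length q \<and> q ! r \<in> S" using assms(2) by (metis diff_less last_conv_nth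
    length_greater_0_conv zero_less_one)
  define r where "r = (LEAST r. r < length q \<and> q ! r \<in> S)"
  have r: "r < length q" "q ! r \<in> S" using LeastI_ex[OF ex] unfolding r_def by auto
  have before_r: "q ! i \<notin> S" if "i < r" for i
    using not_less_Least r that unfolding r_def by (metis order.strict_trans)
  have "set (take (Suc r) q) \<inter> S \<subseteq> {q ! r}"
  proof
    fix u assume u: "u \<in> set (take (Suc r) q) \<inter> S"
    then obtain i where "i < length (take (Suc r) q)" "take (Suc r) q ! i = u"
      by (metis IntD1 in_set_conv_nth)
    then have i: "i \<le> r" "q ! i = u" by auto
    with before_r u have "i = r" by (metis le_neq_implies_less IntD2)
    then show "u \<in> {q ! r}" using i by simp
  qed
  moreover have "is_path E (take (Suc r) q) z (q ! r)" using is_path_take[OF q, of "Suc r"] r by simp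
  ultimately show ?thesis using that r(2) by (meson set_take_subset)
qed

text \<open>Follow a path from z to x until it first meets a path from x to y; the meeting vertex
  splits the three routes into edge-disjoint paths.\<close>

lemma connected_in_three_paths:
  assumes B: "connected_in E B" and xyz: "x \<in> B" "y \<in> B" "z \<in> B"
  obtains c p1 p2 p3 where "c \<in> B" "is_path E p1 c x" "is_path E p2 c y" "is_path E p3 c z"
    "set p1 \<subseteq> B" "set p2 \<subseteq> B" "set p3 \<subseteq> B"
    "path_edges p1 \<inter> path_edges p2 = {}" "path_edges p1 \<inter> path_edges p3 = {}"
    "path_edges p2 \<inter> path_edges p3 = {}"
proof -
  obtain p where p: "is_path E p x y" "set p \<subseteq> B" using connected_in_path[OF B xyz(1,2)] .
  obtain q where q: "is_path E q z x" "set q \<subseteq> B" using connected_in_path[OF B xyz(3,1)] .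
  have "distinct p" "x \<in> set p" using p unfolding is_path_def by (auto intro: hd_in_set)
  obtain q' c where q': "is_path E q' z c" "c \<in> set p" "set q' \<inter> set p \<subseteq> {c}" "set q' \<subseteq> set q"
    using is_path_until_first_hit[OF q(1) \<open>x \<in> set p\<close>] .
  obtain p1 p2 where sp: "p = p1 @ c # p2" using q'(2) by (metis split_list)
  have pa: "is_path E (p1 @ [c]) x c"
    using is_path_take[OF p(1), of "Suc (length p1)"] sp by simp
  have pb: "is_path E (c # p2) c y"
    using is_path_drop[OF p(1), of "length p1"] sp by simp
  have d: "distinct (p1 @ [c])" "distinct (c # p2)" "distinct q'"
    using pa pb q'(1) unfolding is_path_def by auto
  have "set (p1 @ [c]) \<inter> set (c # p2) \<subseteq> {c}" using \<open>distinct p\<close> sp by auto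
  then have "path_edges (p1 @ [c]) \<inter> path_edges (c # p2) = {}"
    "path_edges (p1 @ [c]) \<inter> path_edges q' = {}"
    "path_edges (c # p2) \<inter> path_edges q' = {}"
    using path_edges_disjoint[OF d(1,2)] path_edges_disjoint[OF d(1,3), of c]
      path_edges_disjoint[OF d(2,3), of c] q'(3) sp by auto
  then have "path_edges (rev (p1 @ [c])) \<inter> path_edges (c # p2) = {}"
    "path_edges (rev (p1 @ [c])) \<inter> path_edges (rev q') = {}"
    "path_edges (c # p2) \<inter> path_edges (rev q') = {}"
    by (simp_all only: path_edges_rev)
  moreover have "c \<in> B" "set (rev (p1 @ [c])) \<subseteq> B" "set (c # p2) \<subseteq> B" "set (rev q') \<subseteq> B"
    using p(2) q(2) q'(2,4) sp by auto
  ultimately show ?thesis using that is_path_rev[OF pa] pb is_path_rev[OF q'(1)] by blast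
qed

lemma connected_in_chain:
  assumes "\<And>t. a \<le> t \<Longrightarrow> Suc t < b \<Longrightarrow> {f t, f (Suc t)} \<in> E"
  shows "connected_in E (f ` {a..<b})"
proof -
  let ?B = "f ` {a..<b}"
  let ?R = "\<lambda>u v. u \<in> ?B \<and> v \<in> ?B \<and> {u, v} \<in> E"
  have forward: "?R\<^sup>*\<^sup>* (f s) (f t)" if "a \<le> s" "s \<le> t" "t < b" for s t
    using that
  proof (induction t)
    case (Suc t)
    then show ?case
      using assms[of t] by (cases "s = Suc t") (auto intro: rtranclp.rtrancl_into_rtrancl)
  qed simp
  have "symp ?R" by (auto intro: sympI simp: insert_commute)
  then have backward: "?R\<^sup>*\<^sup>* y x" if "?R\<^sup>*\<^sup>* x y" for x y
    using that by (simp add: symp_rtranclp sympD)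
  show ?thesis unfolding connected_in_def
  proof (intro ballI)
    fix x y assume "x \<in> ?B" "y \<in> ?B"
    then obtain s t where "a \<le> s" "s < b" "a \<le> t" "t < b" "x = f s" "y = f t" by auto
    then show "?R\<^sup>*\<^sup>* x y"
      using forward[of s t] forward[of t s] backward by (cases "s \<le> t") auto
  qed
qed

section \<open>From a \<open>K\<^sub>4\<close>-minor to a \<open>K\<^sub>4\<close>-immersion\<close>

lemma connected_in_star:
  assumes B: "connected_in E B" and J: "card J = 3" "g ` J \<subseteq> B"
  obtains c p where "c \<in> B" "\<And>j. j \<in> J \<Longrightarrow> is_path E (p j) c (g j) \<and> set (p j) \<subseteq> B"
    "\<And>j j'. j \<in> J \<Longrightarrow> j' \<in> J \<Longrightarrow> j \<noteq> j' \<Longrightarrow> path_edges (p j) \<inter> path_edges (p j') = {}"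
proof -
  obtain a b d where abd: "J = {a, b, d}" "a \<noteq> b" "b \<noteq> d" "a \<noteq> d"
    using J(1) card_3_iff by metis
  then have "g a \<in> B" "g b \<in> B" "g d \<in> B" using J(2) by auto
  then obtain c p1 p2 p3 where c: "c \<in> B"
    and paths: "is_path E p1 c (g a)" "is_path E p2 c (g b)" "is_path E p3 c (g d)"
    "set p1 \<subseteq> B" "set p2 \<subseteq> B" "set p3 \<subseteq> B"
    and disj: "path_edges p1 \<inter> path_edges p2 = {}" "path_edges p1 \<inter> path_edges p3 = {}"
    "path_edges p2 \<inter> path_edges p3 = {}"
    by (rule connected_in_three_paths[OF B])
  show ?thesis
  proof (rule that[of c "\<lambda>j. if j = a then p1 else if j = b then p2 else p3"])
    fix j assume "j \<in> J"
    then show "is_path E (if j = a then p1 else if j = b then p2 else p3) c (g j) \<and>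
      set (if j = a then p1 else if j = b then p2 else p3) \<subseteq> B"
      using abd paths by auto
  next
    fix j j' assume "j \<in> J" "j' \<in> J" "j \<noteq> j'"
    then show "path_edges (if j = a then p1 else if j = b then p2 else p3) \<inter>
      path_edges (if j' = a then p1 else if j' = b then p2 else p3) = {}"
      using abd disj by (auto simp: Int_commute)
  qed (rule c)
qed

lemma K4_minor_attachments:
  assumes "has_Kt_minor 4 V E"
  obtains B att where "\<And>i::nat. i < 4 \<Longrightarrow> B i \<subseteq> V \<and> connected_in E (B i)"
    "\<And>x i j. x \<in> B i \<Longrightarrow> x \<in> B j \<Longrightarrow> i < 4 \<Longrightarrow> j < 4 \<Longrightarrow> i = j"
    "\<And>i j. i < 4 \<Longrightarrow> j < 4 \<Longrightarrow> i \<noteq> j \<Longrightarrow> att i j \<in> B i \<and> {att i j, att j i} \<in> E"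
proof -
  obtain B where B: "\<And>i::nat. i < 4 \<Longrightarrow> B i \<noteq> {} \<and> B i \<subseteq> V \<and> connected_in E (B i)"
    and B_disj: "\<And>i j. i < j \<Longrightarrow> j < 4 \<Longrightarrow> B i \<inter> B j = {}"
    and B_adj: "\<And>i j. i < j \<Longrightarrow> j < 4 \<Longrightarrow> \<exists>x\<in>B i. \<exists>y\<in>B j. {x, y} \<in> E"
    using assms unfolding has_Kt_minor_def by metis
  have B_unique: "i = j" if "x \<in> B i" "x \<in> B j" "i < 4" "j < 4" for x i j
    using that B_disj[of i j] B_disj[of j i] by (cases i j rule: linorder_cases) auto
  have "\<forall>ij. \<exists>xy. fst ij < snd ij \<and> snd ij < 4 \<longrightarrow>
      fst xy \<in> B (fst ij) \<and> snd xy \<in> B (snd ij) \<and> {fst xy, snd xy} \<in> E"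
    using B_adj by fastforce
  then obtain ab where ab: "\<forall>ij. fst ij < snd ij \<and> snd ij < 4 \<longrightarrow>
      fst (ab ij) \<in> B (fst ij) \<and> snd (ab ij) \<in> B (snd ij) \<and> {fst (ab ij), snd (ab ij)} \<in> E"
    by (rule choice[THEN exE])
  define att where "att i j = (if i < j then fst (ab (i, j)) else snd (ab (j, i)))" for i j
  have "att i j \<in> B i \<and> {att i j, att j i} \<in> E" if "i < 4" "j < 4" "i \<noteq> j" for i j
    using ab[rule_format, of "(i, j)"] ab[rule_format, of "(j, i)"] that unfolding att_def
    by (auto simp: insert_commute)
  then show ?thesis using B B_unique by (intro that[of B att]) auto
qed

lemma K4_branch_stars:
  assumes B: "\<And>i::nat. i < 4 \<Longrightarrow> connected_in E (B i)"
    and att: "\<And>i j::nat. i < 4 \<Longrightarrow> j < 4 \<Longrightarrow> i \<noteq> j \<Longrightarrow> att i j \<in> B i"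
  obtains cen pth where "\<And>i. i < 4 \<Longrightarrow> cen i \<in> B i"
    "\<And>i j. i < 4 \<Longrightarrow> j < 4 \<Longrightarrow> j \<noteq> i \<Longrightarrow> is_path E (pth i j) (cen i) (att i j) \<and> set (pth i j) \<subseteq> B i"
    "\<And>i j j'. i < 4 \<Longrightarrow> j < 4 \<Longrightarrow> j' < 4 \<Longrightarrow> j \<noteq> i \<Longrightarrow> j' \<noteq> i \<Longrightarrow> j \<noteq> j' \<Longrightarrow>
      path_edges (pth i j) \<inter> path_edges (pth i j') = {}"
proof -
  define star where "star i c p \<longleftrightarrow> c \<in> B i \<and>
      (\<forall>j\<in>{..<4} - {i}. is_path E (p j) c (att i j) \<and> set (p j) \<subseteq> B i) \<and>
      (\<forall>j\<in>{..<4} - {i}. \<forall>j'\<in>{..<4} - {i}. j \<noteq> j' \<longrightarrow> path_edges (p j) \<inter> path_edges (p j') = {})"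
    for i c p
  have stars: "\<forall>i\<in>{..<4}. \<exists>c p. star i c p"
  proof
    fix i :: nat assume i: "i \<in> {..<4}"
    have "card ({..<4} - {i}) = 3" "att i ` ({..<4} - {i}) \<subseteq> B i" using i att by auto
    then obtain c p where "c \<in> B i"
      "\<And>j. j \<in> {..<4} - {i} \<Longrightarrow> is_path E (p j) c (att i j) \<and> set (p j) \<subseteq> B i"
      "\<And>j j'. j \<in> {..<4} - {i} \<Longrightarrow> j' \<in> {..<4} - {i} \<Longrightarrow> j \<noteq> j' \<Longrightarrow>
        path_edges (p j) \<inter> path_edges (p j') = {}"
      using connected_in_star B i by (metis lessThan_iff)
    then show "\<exists>c p. star i c p" unfolding star_def by blast
  qed
  obtain cen where "\<forall>i\<in>{..<4}. \<exists>p. star i (cen i) p" using bchoice[OF stars] ..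
  then obtain pth where "\<forall>i\<in>{..<4}. star i (cen i) (pth i)" by (rule bchoice[THEN exE])
  then show ?thesis unfolding star_def by (intro that[of cen pth]) auto
qed

locale K4_star_model =
  fixes E :: "'a set set" and B :: "nat \<Rightarrow> 'a set" and att :: "nat \<Rightarrow> nat \<Rightarrow> 'a"
    and cen :: "nat \<Rightarrow> 'a" and pth :: "nat \<Rightarrow> nat \<Rightarrow> 'a list"
  assumes branch_unique: "\<And>x i j. x \<in> B i \<Longrightarrow> x \<in> B j \<Longrightarrow> i < 4 \<Longrightarrow> j < 4 \<Longrightarrow> i = j"
    and link: "\<And>i j. i < 4 \<Longrightarrow> j < 4 \<Longrightarrow> i \<noteq> j \<Longrightarrow> {att i j, att j i} \<in> E"
    and star: "\<And>i j. i < 4 \<Longrightarrow> j < 4 \<Longrightarrow> j \<noteq> i \<Longrightarrow>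
      is_path E (pth i j) (cen i) (att i j) \<and> set (pth i j) \<subseteq> B i"
    and star_disjoint: "\<And>i j j'. i < 4 \<Longrightarrow> j < 4 \<Longrightarrow> j' < 4 \<Longrightarrow> j \<noteq> i \<Longrightarrow> j' \<noteq> i \<Longrightarrow> j \<noteq> j' \<Longrightarrow>
      path_edges (pth i j) \<inter> path_edges (pth i j') = {}"
begin

definition glued_path :: "nat \<Rightarrow> nat \<Rightarrow> 'a list" where
  "glued_path i j = pth i j @ rev (pth j i)"

lemma att_in_branch: "i < 4 \<Longrightarrow> j < 4 \<Longrightarrow> i \<noteq> j \<Longrightarrow> att i j \<in> B i"
  using star[of i j] unfolding is_path_def by (metis last_in_set subsetD)

lemma centre_in_branch:
  assumes "i < 4"
  shows "cen i \<in> B i"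
proof -
  define j :: nat where "j = (if i = 0 then 1 else 0)"
  have "j < 4" "j \<noteq> i" unfolding j_def by auto
  with star[OF assms this] show ?thesis unfolding is_path_def by (metis hd_in_set subsetD)
qed

lemma glued_path:
  assumes "i < 4" "j < 4" "i \<noteq> j"
  shows "is_path E (glued_path i j) (cen i) (cen j)"
proof -
  have "set (pth i j) \<inter> set (rev (pth j i)) = {}"
    using star[of i j] star[of j i] assms branch_unique by fastforce
  then show ?thesis
    unfolding glued_path_def using is_path_append star[of i j] is_path_rev star[of j i] link assms
    by metis
qed

lemma star_edge_in_branch:
  assumes "f \<in> path_edges (pth m n)" "m < 4" "n < 4" "n \<noteq> m"
  shows "f \<subseteq> B m" "f \<noteq> {}"
  using star[OF assms(2-4)] assms(1) path_edgeE[of "pth m n" f] unfolding is_path_def by blast+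

lemma glued_path_edge_cases:
  assumes "f \<in> path_edges (glued_path i j)" "i < 4" "j < 4" "i \<noteq> j"
  shows "f \<in> path_edges (pth i j) \<or> f \<in> path_edges (pth j i) \<or> f = {att i j, att j i}"
proof -
  have "pth i j \<noteq> []" "last (pth i j) = att i j" "pth j i \<noteq> []" "last (pth j i) = att j i"
    using star[of i j] star[of j i] assms unfolding is_path_def by auto
  then show ?thesis
    using path_edges_append_rev_subset[of "pth i j" "pth j i"] assms(1) unfolding glued_path_def by auto
qed

text \<open>An edge of a star lies inside one branch set and determines its star path, whereas a linking
  edge meets two branch sets.\<close>

lemma glued_paths_share_edge:
  assumes f: "f \<in> path_edges (glued_path i j)" "f \<in> path_edges (glued_path i' j')"
    and ij: "i < 4" "j < 4" "i \<noteq> j" "i' < 4" "j' < 4" "i' \<noteq> j'"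
  shows "{i, j} = {i', j'}"
proof -
  have star_unique: "(m, n) = (m', n')"
    if "f \<in> path_edges (pth m n)" "f \<in> path_edges (pth m' n')"
      "m < 4" "n < 4" "n \<noteq> m" "m' < 4" "n' < 4" "n' \<noteq> m'" for m n m' n'
  proof -
    have "m = m'" using star_edge_in_branch[OF that(1,3-5)] star_edge_in_branch[OF that(2,6-8)]
      branch_unique that by blast
    then show ?thesis using star_disjoint[of m n n'] that by auto
  qed
  have star_not_link: "f \<noteq> {att a b, att b a}"
    if "f \<in> path_edges (pth m n)" "m < 4" "n < 4" "n \<noteq> m" "a < 4" "b < 4" "a \<noteq> b" for m n a b
    using star_edge_in_branch[OF that(1-4)] att_in_branch that branch_unique by (metis insert_subset)
  have link_unique: "{a, b} = {a', b'}"
    if "f = {att a b, att b a}" "f = {att a' b', att b' a'}"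
      "a < 4" "b < 4" "a \<noteq> b" "a' < 4" "b' < 4" "a' \<noteq> b'" for a b a' b'
    using that att_in_branch branch_unique by (metis doubleton_eq_iff)
  consider "f \<in> path_edges (pth i j)" | "f \<in> path_edges (pth j i)" | "f = {att i j, att j i}"
    using glued_path_edge_cases[OF f(1) ij(1-3)] by blast
  moreover consider "f \<in> path_edges (pth i' j')" | "f \<in> path_edges (pth j' i')"
    | "f = {att i' j', att j' i'}"
    using glued_path_edge_cases[OF f(2) ij(4-6)] by blast
  ultimately show ?thesis
    using ij star_unique star_not_link link_unique by (smt (verit) insert_commute prod.inject)
qed

lemma glued_paths_disjoint:
  assumes "i < j" "j < 4" "i' < j'" "j' < 4" "(i, j) \<noteq> (i', j')"
  shows "path_edges (glued_path i j) \<inter> path_edges (glued_path i' j') = {}"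
  using glued_paths_share_edge[of _ i j i' j'] assms by (fastforce simp: doubleton_eq_iff)

lemma has_K4_immersion:
  assumes "cen ` {..<4} \<subseteq> V"
  shows "has_Kt_immersion 4 V E"
  unfolding has_Kt_immersion_def
proof (intro exI[of _ cen] exI[of _ glued_path] conjI allI impI assms)
  show "inj_on cen {..<4}"
    using centre_in_branch branch_unique unfolding inj_on_def by (metis lessThan_iff)
qed (use glued_path glued_paths_disjoint in auto)

end

theorem has_K4_immersion_if_has_K4_minor:
  assumes "has_Kt_minor 4 V E"
  shows "has_Kt_immersion 4 V E"
proof -
  obtain B att where B: "\<And>i::nat. i < 4 \<Longrightarrow> B i \<subseteq> V \<and> connected_in E (B i)"
    and unique: "\<And>x i j. x \<in> B i \<Longrightarrow> x \<in> B j \<Longrightarrow> i < 4 \<Longrightarrow> j < 4 \<Longrightarrow> i = j"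
    and att: "\<And>i j. i < 4 \<Longrightarrow> j < 4 \<Longrightarrow> i \<noteq> j \<Longrightarrow> att i j \<in> B i \<and> {att i j, att j i} \<in> E"
    by (rule K4_minor_attachments[OF assms]) (rule that)
  show ?thesis
  proof (rule K4_branch_stars[of E B att])
    fix cen pth assume cen: "\<And>i. i < 4 \<Longrightarrow> cen i \<in> B i"
      and paths: "\<And>i j. i < 4 \<Longrightarrow> j < 4 \<Longrightarrow> j \<noteq> i \<Longrightarrow>
        is_path E (pth i j) (cen i) (att i j) \<and> set (pth i j) \<subseteq> B i"
      and disj: "\<And>i j j'. i < 4 \<Longrightarrow> j < 4 \<Longrightarrow> j' < 4 \<Longrightarrow> j \<noteq> i \<Longrightarrow> j' \<noteq> i \<Longrightarrow> j \<noteq> j' \<Longrightarrow>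
        path_edges (pth i j) \<inter> path_edges (pth i j') = {}"
    interpret K4_star_model E B att cen pth
    proof
      fix i j :: nat assume "i < 4" "j < 4" "i \<noteq> j"
      then show "{att i j, att j i} \<in> E" using att by blast
    qed (fact unique paths disj)+
    show ?thesis using B cen by (intro has_K4_immersion) blast
  qed (use B att in auto)
qed

lemma has_Kt_minor_if_clique:
  assumes "T \<subseteq> V" "card T = t" "\<And>x y. x \<in> T \<Longrightarrow> y \<in> T \<Longrightarrow> x \<noteq> y \<Longrightarrow> {x, y} \<in> E"
  shows "has_Kt_minor t V E"
proof (cases "t = 0")
  case False
  then have "finite T" using assms(2) card.infinite by force
  then obtain h where h: "bij_betw h {..<t} T"
    using assms(2) ex_bij_betw_nat_finite lessThan_atLeast0 by metis
  have hT: "h i \<in> T" if "i < t" for i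
    using h that by (auto simp: bij_betw_def)
  have h_inj: "h i \<noteq> h j" if "i < t" "j < t" "i \<noteq> j" for i j
    using h that by (auto simp: bij_betw_def inj_on_def)
  show ?thesis unfolding has_Kt_minor_def
  proof (intro exI[of _ "\<lambda>i. {h i}"] conjI allI impI)
    fix i assume "i < t"
    then show "{h i} \<noteq> {}" "{h i} \<subseteq> V" "connected_in E {h i}"
      using hT assms(1) unfolding connected_in_def by auto
  next
    fix i j assume "i < j \<and> j < t"
    then show "{h i} \<inter> {h j} = {}" "\<exists>x\<in>{h i}. \<exists>y\<in>{h j}. {x, y} \<in> E"
      using hT[of i] hT[of j] h_inj[of i j] assms(3) by auto
  qed
qed (simp add: has_Kt_minor_def)

definition reach :: "('e \<Rightarrow> 'v set) \<Rightarrow> 'e set \<Rightarrow> 'v \<Rightarrow> 'v \<Rightarrow> bool" where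
  "reach ends F = (\<lambda>a b. \<exists>e\<in>F. ends e = {a, b})\<^sup>*\<^sup>*"

lemma reach_refl [simp]: "reach ends F a a"
  unfolding reach_def by simp

lemma reach_mono: "reach ends F a b \<Longrightarrow> F \<subseteq> F' \<Longrightarrow> reach ends F' a b"
  unfolding reach_def by (erule rtranclp_mono[THEN predicate2D, rotated]) auto

lemma reach_trans: "reach ends F a b \<Longrightarrow> reach ends F b c \<Longrightarrow> reach ends F a c"
  unfolding reach_def by (rule rtranclp_trans)

lemma reach_sym: "reach ends F a b \<Longrightarrow> reach ends F b a"
proof -
  have "symp (\<lambda>a b. \<exists>e\<in>F. ends e = {a, b})" by (auto intro: sympI simp: insert_commute)
  then show "reach ends F a b \<Longrightarrow> reach ends F b a"
    unfolding reach_def by (simp add: symp_rtranclp sympD)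
qed

lemma reach_edge: "e \<in> F \<Longrightarrow> ends e = {a, b} \<Longrightarrow> reach ends F a b"
  unfolding reach_def by auto

lemma reach_exit:
  assumes "reach ends F y z" "y \<in> A" "z \<notin> A"
  shows "\<exists>s\<in>F. \<exists>w w'. ends s = {w, w'} \<and> w \<in> A \<and> w' \<notin> A \<and>
    reach ends {e\<in>F. ends e \<inter> A = {}} w' z"
  using assms unfolding reach_def
proof (induction rule: rtranclp_induct)
  case (step z' z)
  obtain e where e: "e \<in> F" "ends e = {z', z}" using step(2) by blast
  show ?case
  proof (cases "z' \<in> A")
    case True
    then show ?thesis using e step.prems by auto
  next
    case False
    then obtain s w w' where s: "s \<in> F" "ends s = {w, w'}" "w \<in> A" "w' \<notin> A"
      "(\<lambda>a b. \<exists>e\<in>{e\<in>F. ends e \<inter> A = {}}. ends e = {a, b})\<^sup>*\<^sup>* w' z'"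
      using step.IH step.prems by blast
    have "e \<in> {e\<in>F. ends e \<inter> A = {}}" using e False step.prems by auto
    with e s(5) have "(\<lambda>a b. \<exists>e\<in>{e\<in>F. ends e \<inter> A = {}}. ends e = {a, b})\<^sup>*\<^sup>* w' z"
      by (blast intro: rtranclp.rtrancl_into_rtrancl)
    then show ?thesis using s by blast
  qed
qed simp

lemma reach_walk:
  assumes "reach ends F p q"
  obtains vs es where "length vs = Suc (length es)" "distinct vs" "distinct es"
    "vs ! 0 = p" "vs ! length es = q" "set es \<subseteq> F"
    "\<And>i. i < length es \<Longrightarrow> ends (es ! i) = {vs ! i, vs ! Suc i}"
proof -
  let ?R = "\<lambda>a b. \<exists>e\<in>F. ends e = {a, b}"
  obtain xs0 where "rtrancl_path ?R p xs0 q"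
    using assms unfolding reach_def rtranclp_eq_rtrancl_path by blast
  then obtain xs where xs: "rtrancl_path ?R p xs q" "distinct (p # xs)"
    by (rule rtrancl_path_distinct)
  define vs where "vs = p # xs"
  define m where "m = length xs"
  have last: "vs ! m = q"
    using xs(1) rtrancl_path_last[OF xs(1)] unfolding vs_def m_def
    by (cases xs) (auto elim: rtrancl_path.cases simp: last_conv_nth)
  have "\<exists>f\<in>F. ends f = {vs ! i, vs ! Suc i}" if "i < m" for i
    using rtrancl_path_nth[OF xs(1)] that unfolding vs_def m_def by simp
  then obtain g where g: "\<And>i. i < m \<Longrightarrow> g i \<in> F \<and> ends (g i) = {vs ! i, vs ! Suc i}"
    by metis
  have "inj_on g {..<m}"
  proof (rule inj_onI)
    fix i j assume ij: "i \<in> {..<m}" "j \<in> {..<m}" "g i = g j"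
    then have "{vs ! i, vs ! Suc i} = {vs ! j, vs ! Suc j}" using g by (metis lessThan_iff)
    moreover have "distinct vs" "length vs = Suc m" using xs(2) unfolding vs_def m_def by auto
    ultimately show "i = j"
      using ij(1,2) by (auto simp: doubleton_eq_iff nth_eq_iff_index_eq)
  qed
  then have "distinct (map g [0..<m])" by (simp add: distinct_map lessThan_atLeast0)
  moreover have "set (map g [0..<m]) \<subseteq> F" using g by auto
  ultimately show ?thesis
    using xs(2) last g by (intro that[of vs "map g [0..<m]"]) (auto simp: vs_def m_def)
qed

lemma in_line_edges_iff:
  "{x, y} \<in> line_edges EH ends \<longleftrightarrow> x \<in> EH \<and> y \<in> EH \<and> x \<noteq> y \<and> ends x \<inter> ends y \<noteq> {}"
  unfolding line_edges_def by (auto simp: doubleton_eq_iff)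

lemma line_edgesE:
  assumes "f \<in> line_edges EH ends"
  obtains x y where "f = {x, y}" "x \<in> EH" "y \<in> EH" "x \<noteq> y" "ends x \<inter> ends y \<noteq> {}"
  using assms unfolding line_edges_def by blast

definition cycle_seq :: "'v set \<Rightarrow> 'e set \<Rightarrow> ('e \<Rightarrow> 'v set) \<Rightarrow> 'v list \<Rightarrow> 'e list \<Rightarrow> bool" where
  "cycle_seq VH EH ends vs es \<longleftrightarrow> length vs = length es \<and> 2 \<le> length vs \<and> distinct vs \<and>
     distinct es \<and> set vs \<subseteq> VH \<and> set es \<subseteq> EH \<and>
     (\<forall>i<length es. ends (es ! i) = {vs ! i, vs ! (Suc i mod length vs)})"

lemma is_cycle_iff_cycle_seq: "is_cycle VH EH ends C \<longleftrightarrow> (\<exists>vs es. cycle_seq VH EH ends vs es \<and> set es = C)"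
  unfolding is_cycle_def cycle_seq_def by blast

definition overlapping_cycles :: "'v set \<Rightarrow> 'e set \<Rightarrow> ('e \<Rightarrow> 'v set) \<Rightarrow> bool" where
  "overlapping_cycles VH EH ends \<longleftrightarrow> (\<exists>C1 C2. is_cycle VH EH ends C1 \<and> is_cycle VH EH ends C2 \<and>
     C1 \<noteq> C2 \<and> C1 \<inter> C2 \<noteq> {} \<and> (card C1 \<noteq> 2 \<or> card C2 \<noteq> 2))"

locale loopless_multigraph =
  fixes VH :: "'v set" and EH :: "'e set" and ends :: "'e \<Rightarrow> 'v set"
  assumes multigraph: "multigraph VH EH ends"
begin

lemma finite_EH: "finite EH"
  using multigraph unfolding multigraph_def by auto

lemma finite_VH: "finite VH"
  using multigraph unfolding multigraph_def by auto

lemma ends_subset: "e \<in> EH \<Longrightarrow> ends e \<subseteq> VH"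
  using multigraph unfolding multigraph_def by auto

lemma card_ends: "e \<in> EH \<Longrightarrow> card (ends e) = 2"
  using multigraph unfolding multigraph_def by auto

lemma ends_obtain:
  assumes "e \<in> EH"
  obtains a b where "a \<noteq> b" "ends e = {a, b}"
  using card_ends[OF assms] card_2_iff by metis

lemma other_end:
  assumes "e \<in> EH" "u \<in> ends e"
  obtains v where "ends e = {u, v}" "u \<noteq> v"
proof -
  obtain a b where "a \<noteq> b" "ends e = {a, b}" using ends_obtain[OF assms(1)] .
  then show ?thesis using that assms(2) by (cases "u = a") (auto simp: insert_commute)
qed

lemma reach_within_edge: "e \<in> F \<Longrightarrow> e \<in> EH \<Longrightarrow> a \<in> ends e \<Longrightarrow> b \<in> ends e \<Longrightarrow> reach ends F a b"
  by (cases "a = b") (auto elim!: ends_obtain intro: reach_edge reach_sym)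

lemma line_path_reach:
  assumes "is_path (line_edges EH ends) p a b" "a \<in> EH" "y \<in> ends a" "z \<in> ends b"
  shows "set p \<subseteq> EH \<and> reach ends (set p) y z"
  using assms
proof (induction p arbitrary: a y)
  case (Cons a' p)
  then have a': "a' = a" unfolding is_path_def by simp
  show ?case
  proof (cases p)
    case Nil
    then have "b = a" using Cons.prems(1) a' unfolding is_path_def by simp
    then show ?thesis using Cons.prems a' Nil reach_within_edge[of a "{a}"] by simp
  next
    case (Cons a'' p')
    have "{a, a''} \<in> line_edges EH ends"
      using Cons.prems(1) a' \<open>p = a'' # p'\<close> unfolding is_path_def by force
    then obtain w where w: "w \<in> ends a" "w \<in> ends a''" "a'' \<in> EH" by (auto simp: in_line_edges_iff)
    have "is_path (line_edges EH ends) p a'' b"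
      using is_path_tl[OF Cons.prems(1)] \<open>p = a'' # p'\<close> by simp
    then have "set p \<subseteq> EH \<and> reach ends (set p) w z"
      using Cons.IH w Cons.prems(4) by blast
    moreover have "reach ends (set (a' # p)) y w"
      using reach_within_edge[of a "set (a' # p)" y w] Cons.prems(2,3) w(1) a' by simp
    ultimately show ?thesis
      using Cons.prems(2) a' by (auto intro: reach_trans reach_mono)
  qed
qed (simp add: is_path_def)

abbreviation cycle :: "'v list \<Rightarrow> 'e list \<Rightarrow> bool" where
  "cycle \<equiv> cycle_seq VH EH ends"

lemma cycle_ends:
  "cycle vs es \<Longrightarrow> i < length es \<Longrightarrow> ends (es ! i) = {vs ! i, vs ! (Suc i mod length vs)}"
  unfolding cycle_seq_def by blast

lemma cycle_length: "cycle vs es \<Longrightarrow> length vs = length es"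
  unfolding cycle_seq_def by blast

lemma cycle_length_ge_2: "cycle vs es \<Longrightarrow> 2 \<le> length es"
  unfolding cycle_seq_def by auto

lemma cycle_distinct: "cycle vs es \<Longrightarrow> distinct vs \<and> distinct es"
  unfolding cycle_seq_def by blast

lemma cycle_edges_subset: "cycle vs es \<Longrightarrow> set es \<subseteq> EH"
  unfolding cycle_seq_def by blast

lemma card_cycle: "cycle vs es \<Longrightarrow> card (set es) = length es"
  using cycle_distinct distinct_card by blast

lemma cycle_ends_subset:
  assumes "cycle vs es" "x \<in> set es"
  shows "ends x \<subseteq> set vs"
proof -
  obtain i where i: "i < length es" "es ! i = x" using assms(2) by (auto simp: in_set_conv_nth)
  moreover have "length vs = length es" using cycle_length[OF assms(1)] .
  moreover have "Suc i mod length es < length es" using i(1) by (intro mod_less_divisor) linarith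
  ultimately show ?thesis using cycle_ends[OF assms(1) i(1)] by auto
qed

lemma cycle_vertex_in_ends:
  assumes c: "cycle vs es" and i: "i < length es"
  shows "vs ! i \<in> ends (es ! i)" and "0 < i \<Longrightarrow> vs ! i \<in> ends (es ! (i - 1))"
    and "vs ! 0 \<in> ends (es ! (length es - 1))"
proof -
  show "vs ! i \<in> ends (es ! i)" using cycle_ends[OF c i] by simp
  show "vs ! i \<in> ends (es ! (i - 1))" if "0 < i"
    using cycle_ends[OF c, of "i - 1"] cycle_length[OF c] that i by simp
  have "Suc (length es - 1) = length es" using i by simp
  then show "vs ! 0 \<in> ends (es ! (length es - 1))"
    using cycle_ends[OF c, of "length es - 1"] cycle_length[OF c] i by simp
qed

lemma cycle_arc_reach:
  assumes c: "cycle vs es" and ij: "i \<le> j" "j < length vs"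
  shows "reach ends ((!) es ` {i..<j}) (vs ! i) (vs ! j)"
  using ij
proof (induction j)
  case (Suc j)
  show ?case
  proof (cases "i = Suc j")
    case False
    then have "i \<le> j" "j < length vs" using Suc.prems by auto
    then have "reach ends ((!) es ` {i..<j}) (vs ! i) (vs ! j)" using Suc.IH by simp
    then have "reach ends ((!) es ` {i..<Suc j}) (vs ! i) (vs ! j)" by (rule reach_mono) auto
    moreover have "ends (es ! j) = {vs ! j, vs ! Suc j}"
      using cycle_ends[OF c, of j] cycle_length[OF c] Suc.prems by simp
    then have "reach ends ((!) es ` {i..<Suc j}) (vs ! j) (vs ! Suc j)"
      using \<open>i \<le> j\<close> by (intro reach_edge) auto
    ultimately show ?thesis by (rule reach_trans)
  qed simp
qed simp

lemma cycle_reach: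
  assumes c: "cycle vs es" and "a \<in> set vs" "b \<in> set vs"
  shows "reach ends (set es) a b"
proof -
  have "reach ends (set es) (vs ! 0) x" if x: "x \<in> set vs" for x
  proof -
    obtain i where i: "i < length vs" "vs ! i = x" using x by (auto simp: in_set_conv_nth)
    then have "reach ends ((!) es ` {0..<i}) (vs ! 0) x" using cycle_arc_reach[OF c, of 0 i] by simp
    moreover have "(!) es ` {0..<i} \<subseteq> set es" using i cycle_length[OF c] by auto
    ultimately show ?thesis by (rule reach_mono)
  qed
  with assms show ?thesis by (metis reach_sym reach_trans)
qed

lemma cycle_vertex_two_edges:
  assumes c: "cycle vs es" and w: "w \<in> set vs"
  obtains e1 e2 where "e1 \<in> set es" "e2 \<in> set es" "e1 \<noteq> e2" "w \<in> ends e1" "w \<in> ends e2"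
proof -
  define k where "k = length vs"
  obtain i where i: "i < k" "vs ! i = w" using w unfolding k_def by (auto simp: in_set_conv_nth)
  have k: "length es = k" "2 \<le> k" using cycle_length[OF c] cycle_length_ge_2[OF c] k_def by auto
  define j where "j = (i + k - 1) mod k"
  have j: "j < k" "Suc j mod k = i" "j \<noteq> i"
    using i k by (auto simp: j_def mod_Suc_eq mod_if)
  have "w \<in> ends (es ! i)" "w \<in> ends (es ! j)"
    using cycle_ends[OF c, of i] cycle_ends[OF c, of j] i j k k_def by auto
  moreover have "es ! i \<noteq> es ! j"
    using cycle_distinct[OF c] i j k by (simp add: nth_eq_iff_index_eq)
  ultimately show ?thesis using that i j k by (metis nth_mem)
qed

lemma cycle_rotate:
  assumes c: "cycle vs es"
  shows "cycle (rotate s vs) (rotate s es)"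
proof -
  define k where "k = length vs"
  have k: "length es = k" "2 \<le> k" using cycle_length[OF c] cycle_length_ge_2[OF c] k_def by auto
  have "\<forall>i<length (rotate s es).
      ends (rotate s es ! i) = {rotate s vs ! i, rotate s vs ! (Suc i mod length (rotate s vs))}"
  proof (intro allI impI)
    fix i assume "i < length (rotate s es)"
    then have i: "i < k" using k by simp
    have "Suc i mod k < length vs" using k unfolding k_def by (intro mod_less_divisor) linarith
    then have "rotate s vs ! (Suc i mod k) = vs ! ((s + Suc i mod k) mod k)"
      using nth_rotate k_def by metis
    moreover have "(s + Suc i mod k) mod k = Suc ((s + i) mod k) mod k"
      by (simp add: mod_add_right_eq mod_Suc_eq)
    moreover have "(s + i) mod k < k" using k by (intro mod_less_divisor) linarith
    ultimately show "ends (rotate s es ! i) = {rotate s vs ! i, rotate s vs ! (Suc i mod length (rotate s vs))}"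
      using cycle_ends[OF c, of "(s + i) mod k"] i k k_def by (simp add: nth_rotate)
  qed
  with c show ?thesis unfolding cycle_seq_def by simp
qed

lemma cycle_ends_inj:
  assumes c: "cycle vs es" and "3 \<le> length es" "i < length es" "j < length es"
    and "ends (es ! i) = ends (es ! j)"
  shows "i = j"
proof -
  define k where "k = length vs"
  have k: "length es = k" "3 \<le> k" using cycle_length[OF c] assms(2) k_def by auto
  have "{vs ! i, vs ! (Suc i mod k)} = {vs ! j, vs ! (Suc j mod k)}"
    using assms(5) cycle_ends[OF c, of i] cycle_ends[OF c, of j] assms(3,4) k k_def by simp
  moreover have "Suc i mod k < k" "Suc j mod k < k" using k by simp_all
  ultimately have "i = j \<or> (i = Suc j mod k \<and> Suc i mod k = j)"
    using cycle_distinct[OF c] assms(3,4) k k_def by (auto simp: doubleton_eq_iff nth_eq_iff_index_eq)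
  then show ?thesis using assms(3,4) k by (auto simp: mod_Suc split: if_splits)
qed

lemma digon_parallel:
  assumes "cycle vs es" "length es = 2"
  shows "ends (es ! 0) = ends (es ! 1)"
  using cycle_ends[OF assms(1), of 0] cycle_ends[OF assms(1), of 1] cycle_length[OF assms(1)] assms(2)
  by (simp add: insert_commute)

lemma cycle_adjacent_in_line_graph:
  assumes c: "cycle vs es" and t: "Suc t < length es"
  shows "{es ! t, es ! Suc t} \<in> line_edges EH ends"
proof -
  have "vs ! Suc t \<in> ends (es ! t)" "vs ! Suc t \<in> ends (es ! Suc t)"
    using cycle_ends[OF c, of t] cycle_ends[OF c, of "Suc t"] t cycle_length[OF c] by auto
  moreover have "es ! t \<noteq> es ! Suc t" using cycle_distinct[OF c] t by (simp add: nth_eq_iff_index_eq)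
  moreover have "es ! t \<in> EH" "es ! Suc t \<in> EH" using cycle_edges_subset[OF c] t by auto
  ultimately show ?thesis by (auto simp: in_line_edges_iff)
qed

lemma cycle_ends_adjacent_in_line_graph:
  assumes c: "cycle vs es" and "3 \<le> length es"
  shows "{es ! 0, es ! (length es - 1)} \<in> line_edges EH ends"
proof -
  have "0 < length es" using assms(2) by linarith
  then have "vs ! 0 \<in> ends (es ! 0)" "vs ! 0 \<in> ends (es ! (length es - 1))"
    using cycle_vertex_in_ends[OF c] by auto
  moreover have "length es - 1 < length es" "length es - 1 \<noteq> 0" using assms(2) by auto
  then have "es ! 0 \<noteq> es ! (length es - 1)" "es ! 0 \<in> EH" "es ! (length es - 1) \<in> EH"
    using cycle_distinct[OF c] cycle_edges_subset[OF c] \<open>0 < length es\<close>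
    by (auto simp: nth_eq_iff_index_eq simp del: length_greater_0_conv)
  ultimately show ?thesis by (auto simp: in_line_edges_iff)
qed

lemma cycle_arcs_disjoint:
  assumes "cycle vs es" "y1 \<le> x2" "y2 \<le> length es"
  shows "(!) es ` {x1..<y1} \<inter> (!) es ` {x2..<y2} = {}"
  using assms cycle_distinct[OF assms(1)] by (fastforce simp: nth_eq_iff_index_eq)

lemma cycle_arc_connected:
  assumes "cycle vs es" "y \<le> length es"
  shows "connected_in (line_edges EH ends) ((!) es ` {x..<y})"
  using assms cycle_adjacent_in_line_graph by (intro connected_in_chain) auto

lemma cycle_arcs_adjacent:
  assumes c: "cycle vs es" and "0 < b" "b < d" "d < length es"
  shows "\<exists>x\<in>(!) es ` {0..<b}. \<exists>y\<in>(!) es ` {b..<d}. {x, y} \<in> line_edges EH ends"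
    "\<exists>x\<in>(!) es ` {b..<d}. \<exists>y\<in>(!) es ` {d..<length es}. {x, y} \<in> line_edges EH ends"
    "\<exists>x\<in>(!) es ` {0..<b}. \<exists>y\<in>(!) es ` {d..<length es}. {x, y} \<in> line_edges EH ends"
proof -
  have "{es ! (b - 1), es ! b} \<in> line_edges EH ends" "{es ! (d - 1), es ! d} \<in> line_edges EH ends"
    using cycle_adjacent_in_line_graph[OF c, of "b - 1"] cycle_adjacent_in_line_graph[OF c, of "d - 1"]
      assms by simp_all
  moreover have "{es ! 0, es ! (length es - 1)} \<in> line_edges EH ends"
    using cycle_ends_adjacent_in_line_graph[OF c] assms by simp
  ultimately show
    "\<exists>x\<in>(!) es ` {0..<b}. \<exists>y\<in>(!) es ` {b..<d}. {x, y} \<in> line_edges EH ends"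
    "\<exists>x\<in>(!) es ` {b..<d}. \<exists>y\<in>(!) es ` {d..<length es}. {x, y} \<in> line_edges EH ends"
    "\<exists>x\<in>(!) es ` {0..<b}. \<exists>y\<in>(!) es ` {d..<length es}. {x, y} \<in> line_edges EH ends"
    using assms by force+
qed

lemma cycle_through_edge:
  assumes e: "e \<in> EH" "ends e = {p, q}" and F: "F \<subseteq> EH" "e \<notin> F" and r: "reach ends F p q"
  obtains vs es where "cycle vs es" "e \<in> set es" "set es \<subseteq> insert e F"
proof -
  obtain vs es0 where w: "length vs = Suc (length es0)" "distinct vs" "distinct es0"
    "vs ! 0 = p" "vs ! length es0 = q" "set es0 \<subseteq> F"
    "\<And>i. i < length es0 \<Longrightarrow> ends (es0 ! i) = {vs ! i, vs ! Suc i}"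
    using reach_walk[OF r] by blast
  define m where "m = length es0"
  define es where "es = es0 @ [e]"
  have "p \<noteq> q" using card_ends[OF e(1)] e(2) by auto
  then have "1 \<le> length es0" using w(4,5) by (metis less_one not_le)
  have ends_es: "ends (es ! i) = {vs ! i, vs ! (Suc i mod length vs)}" if "i < length es" for i
  proof (cases "i < m")
    case True
    then show ?thesis using w(1,7) m_def by (simp add: es_def nth_append)
  next
    case False
    then have "i = m" using that m_def es_def by simp
    then show ?thesis using w(1,4,5) e(2) m_def by (simp add: es_def nth_append insert_commute)
  qed
  have es: "distinct es" "set es \<subseteq> insert e F"
    using w(3,6) F(2) by (auto simp: es_def)
  then have "set es \<subseteq> EH" using e(1) F(1) by auto
  have "set vs \<subseteq> VH"
  proof
    fix v assume "v \<in> set vs"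
    then obtain i where "i < length es" "vs ! i = v" using w(1) m_def by (metis es_def in_set_conv_nth length_append_singleton)
    with \<open>set es \<subseteq> EH\<close> show "v \<in> VH" using ends_es ends_subset by (metis insertI1 nth_mem subsetD)
  qed
  moreover note es
  ultimately have "cycle vs es"
    unfolding cycle_seq_def using w(1,2) ends_es \<open>1 \<le> length es0\<close> F(1) e(1) m_def
    by (auto simp: es_def)
  then show ?thesis using that \<open>set es \<subseteq> insert e F\<close> by (simp add: es_def)
qed

lemma cycle_is_digon_if_detour:
  assumes no_overlap: "\<not> overlapping_cycles VH EH ends"
    and c: "cycle vs es" and e: "e \<in> set es" "ends e = {a, b}" and f: "f \<in> set es" "f \<noteq> e"
    and r: "reach ends (EH - {e, f}) a b"
  shows "length es = 2"
proof -
  have "e \<in> EH" using e(1) cycle_edges_subset[OF c] by blast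
  then obtain vs' es' where c': "cycle vs' es'" "e \<in> set es'" "set es' \<subseteq> insert e (EH - {e, f})"
    using cycle_through_edge[OF _ e(2) _ _ r] by blast
  then have "set es \<noteq> set es'" "set es \<inter> set es' \<noteq> {}" using e(1) f by blast+
  moreover have "is_cycle VH EH ends (set es)" "is_cycle VH EH ends (set es')"
    using c c'(1) unfolding is_cycle_iff_cycle_seq by blast+
  ultimately have "card (set es) = 2" using no_overlap unfolding overlapping_cycles_def by blast
  then show ?thesis using card_cycle[OF c] by simp
qed

lemma digon_not_within_long_cycle:
  assumes c: "cycle vs es" "3 \<le> length es" and d: "cycle vs' es'" "length es' = 2"
  shows "\<not> set es' \<subseteq> set es"
proof
  assume "set es' \<subseteq> set es"
  then have "es' ! 0 \<in> set es" "es' ! 1 \<in> set es" using d(2) by auto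
  then obtain i j where "i < length es" "es ! i = es' ! 0" "j < length es" "es ! j = es' ! 1"
    by (metis in_set_conv_nth)
  then have "es' ! 0 = es' ! 1" using cycle_ends_inj[OF c] digon_parallel[OF d] by metis
  then show False using cycle_distinct[OF d(1)] d(2) by (simp add: nth_eq_iff_index_eq)
qed

end

section \<open>Overlapping cycles give a \<open>K\<^sub>4\<close>-minor of the line graph\<close>

lemma all_less_4_iff: "(\<forall>i<4. P i) \<longleftrightarrow> P 0 \<and> P 1 \<and> P 2 \<and> P (3::nat)"
  by (auto simp: less_Suc_eq numeral_eq_Suc)

lemma all_pairs_less_4_iff:
  "(\<forall>i j. i < j \<and> j < 4 \<longrightarrow> P i j) \<longleftrightarrow> P 0 1 \<and> P 0 2 \<and> P 0 3 \<and> P 1 2 \<and> P 1 3 \<and> P 2 (3::nat)"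
  by (auto simp: less_Suc_eq numeral_eq_Suc)

lemma maximal_run_outside:
  assumes "xs ! 0 \<in> S" "x \<in> set xs" "x \<notin> S"
  obtains r1 r2 where "0 < r1" "r1 < r2" "r2 \<le> length xs" "xs ! (r1 - 1) \<in> S"
    "\<And>t. r1 \<le> t \<Longrightarrow> t < r2 \<Longrightarrow> xs ! t \<notin> S" "r2 = length xs \<or> xs ! r2 \<in> S"
proof -
  have ex1: "\<exists>r. r < length xs \<and> xs ! r \<notin> S" using assms(2,3) by (metis in_set_conv_nth)
  define r1 where "r1 = (LEAST r. r < length xs \<and> xs ! r \<notin> S)"
  have r1: "r1 < length xs" "xs ! r1 \<notin> S" using LeastI_ex[OF ex1] unfolding r1_def by auto
  have before_r1: "xs ! r \<in> S" if "r < r1" for r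
    using not_less_Least[of r "\<lambda>r. r < length xs \<and> xs ! r \<notin> S"] that r1(1) unfolding r1_def by auto
  have "0 < r1" using r1(2) assms(1) by (cases r1) auto
  have ex2: "\<exists>r. r1 < r \<and> (r = length xs \<or> xs ! r \<in> S)" using r1(1) by blast
  define r2 where "r2 = (LEAST r. r1 < r \<and> (r = length xs \<or> xs ! r \<in> S))"
  have r2: "r1 < r2" "r2 = length xs \<or> xs ! r2 \<in> S" using LeastI_ex[OF ex2] unfolding r2_def by auto
  have "r2 \<le> length xs" unfolding r2_def using r1(1) by (intro Least_le) simp
  moreover have "xs ! t \<notin> S" if "r1 \<le> t" "t < r2" for t
  proof (cases "t = r1")
    case False
    then show ?thesis
      using not_less_Least[of t "\<lambda>r. r1 < r \<and> (r = length xs \<or> xs ! r \<in> S)"] that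
      unfolding r2_def by auto
  qed (use r1 in simp)
  ultimately show ?thesis using that \<open>0 < r1\<close> r2 before_r1[of "r1 - 1"] by simp
qed

context loopless_multigraph
begin

lemma line_graph_K4_minor_if_degree_ge_4:
  assumes "4 \<le> max_degree VH EH ends"
  shows "has_Kt_minor 4 EH (line_edges EH ends)"
proof -
  have "\<exists>d\<in>insert 0 (mdegree VH EH ends ` VH). 4 \<le> d"
    using assms finite_VH Max_ge_iff[of "insert 0 (mdegree VH EH ends ` VH)"]
    unfolding max_degree_def by simp
  then obtain w where "4 \<le> card {e \<in> EH. w \<in> ends e}" unfolding mdegree_def by auto
  then obtain T where "T \<subseteq> {e \<in> EH. w \<in> ends e}" "card T = 4"
    by (metis obtain_subset_with_card_n)
  then show ?thesis by (intro has_Kt_minor_if_clique[of T]) (auto simp: in_line_edges_iff)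
qed

text \<open>Branch sets: the ear Q and three arcs of the cycle, the last arc being the single edge
  before the first vertex.\<close>

lemma K4_minor_of_ear_at_vertex_0:
  assumes c: "cycle vs es" and k3: "3 \<le> length es"
    and Q: "connected_in (line_edges EH ends) Q" "Q \<subseteq> EH" "Q \<inter> set es = {}"
    and q: "q1 \<in> Q" "vs ! 0 \<in> ends q1" "q2 \<in> Q" "vs ! j \<in> ends q2"
    and j: "0 < j" "j < length es"
  shows "has_Kt_minor 4 EH (line_edges EH ends)"
proof -
  define k where "k = length es"
  define b where "b = (if j < k - 1 then j else j - 1)"
  have b: "0 < b" "b < k - 1" using j k3 unfolding b_def k_def by auto
  have ends_at: "vs ! j \<in> ends (es ! b)" "vs ! 0 \<in> ends (es ! 0)" "vs ! 0 \<in> ends (es ! (k - 1))"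
    using cycle_vertex_in_ends[OF c j(2)] cycle_vertex_in_ends[OF c, of 0] j unfolding b_def k_def
    by (auto simp del: length_greater_0_conv)
  have es: "es ! t \<in> EH" "es ! t \<notin> Q" if "t < k" for t
    using cycle_edges_subset[OF c] Q(3) that unfolding k_def by auto
  have Q_adj: "\<exists>x\<in>Q. \<exists>y\<in>(!) es ` {s..<t}. {x, y} \<in> line_edges EH ends"
    if "p \<in> {s..<t}" "t \<le> k" "q \<in> Q" "v \<in> ends q" "v \<in> ends (es ! p)" for s t p q v
  proof -
    have "p < k" using that by auto
    then have "{q, es ! p} \<in> line_edges EH ends"
      using es[of p] that Q(2) by (auto simp: in_line_edges_iff)
    then show ?thesis using that by blast
  qed
  have Q_arc: "Q \<inter> (!) es ` {x..<y} = {}" if "y \<le> k" for x y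
    using es(2) that by fastforce
  define arc where "arc x y = (!) es ` {x..<y}" for x y
  define B where "B i = [Q, arc 0 b, arc b (k - 1), arc (k - 1) k] ! i" for i
  have B: "B 0 = Q" "B 1 = arc 0 b" "B 2 = arc b (k - 1)" "B 3 = arc (k - 1) k"
    by (simp_all add: B_def numeral_eq_Suc)
  have "\<forall>i<4. B i \<noteq> {} \<and> B i \<subseteq> EH \<and> connected_in (line_edges EH ends) (B i)"
    unfolding all_less_4_iff B arc_def using Q q(1) b cycle_arc_connected[OF c] es
    by (auto simp: k_def)
  moreover have "\<forall>i j. i < j \<and> j < 4 \<longrightarrow>
      B i \<inter> B j = {} \<and> (\<exists>x\<in>B i. \<exists>y\<in>B j. {x, y} \<in> line_edges EH ends)"
    unfolding all_pairs_less_4_iff B arc_def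
    using cycle_arcs_disjoint[OF c] Q_arc b q ends_at cycle_arcs_adjacent[OF c b(1) b(2)]
      Q_adj[of 0 0 b q1 "vs ! 0"] Q_adj[of b b "k - 1" q2 "vs ! j"] Q_adj[of "k - 1" "k - 1" k q1 "vs ! 0"]
    by (auto simp: k_def)
  ultimately show ?thesis unfolding has_Kt_minor_def by blast
qed

lemma K4_minor_of_cycle_with_ear:
  assumes c: "cycle vs es" "3 \<le> length es"
    and Q: "connected_in (line_edges EH ends) Q" "Q \<subseteq> EH" "Q \<inter> set es = {}"
    and q: "q1 \<in> Q" "q2 \<in> Q" "\<alpha> \<in> ends q1" "\<beta> \<in> ends q2" "\<alpha> \<in> set vs" "\<beta> \<in> set vs" "\<alpha> \<noteq> \<beta>"
  shows "has_Kt_minor 4 EH (line_edges EH ends)"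
proof -
  obtain i where i: "i < length vs" "vs ! i = \<alpha>" using q(5) by (auto simp: in_set_conv_nth)
  define vs' where "vs' = rotate i vs"
  define es' where "es' = rotate i es"
  have c': "cycle vs' es'" unfolding vs'_def es'_def by (rule cycle_rotate[OF c(1)])
  have "vs \<noteq> []" using i(1) by auto
  then have "vs' ! 0 = \<alpha>" using i nth_rotate[of 0 vs i] unfolding vs'_def by simp
  moreover have "\<beta> \<in> set vs'" using q(6) unfolding vs'_def by simp
  then obtain j where j: "j < length vs'" "vs' ! j = \<beta>" by (metis in_set_conv_nth)
  ultimately have "0 < j" using q(7) by (cases j) auto
  moreover have "length vs' = length es'" "length es' = length es" "set es' = set es"
    using cycle_length[OF c'] unfolding es'_def by simp_all
  ultimately show ?thesis
    using K4_minor_of_ear_at_vertex_0[OF c', of Q q1 q2 j] c(2) Q q j \<open>vs' ! 0 = \<alpha>\<close> by simp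
qed

text \<open>The ear is a maximal run of edges of the second cycle outside the first one.\<close>

lemma cycle_ear:
  assumes c: "cycle vs es" and c': "cycle vs' es'" "es' ! 0 \<in> set es" "x \<in> set es'" "x \<notin> set es"
  obtains Q q1 q2 \<alpha> \<beta> where "connected_in (line_edges EH ends) Q" "Q \<subseteq> EH" "Q \<inter> set es = {}"
    "q1 \<in> Q" "q2 \<in> Q" "\<alpha> \<in> ends q1" "\<beta> \<in> ends q2" "\<alpha> \<in> set vs" "\<beta> \<in> set vs" "\<alpha> \<noteq> \<beta>"
proof -
  define k where "k = length es'"
  have k: "length vs' = k" "2 \<le> k" using cycle_length[OF c'(1)] cycle_length_ge_2[OF c'(1)] k_def by auto
  obtain r1 r2 where r: "0 < r1" "r1 < r2" "r2 \<le> k" "es' ! (r1 - 1) \<in> set es"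
    "\<And>t. r1 \<le> t \<Longrightarrow> t < r2 \<Longrightarrow> es' ! t \<notin> set es" "r2 = k \<or> es' ! r2 \<in> set es"
    using maximal_run_outside[of es' "set es", OF c'(2-4)] unfolding k_def by blast
  define Q where "Q = (!) es' ` {r1..<r2}"
  have "connected_in (line_edges EH ends) Q"
    unfolding Q_def using cycle_arc_connected[OF c'(1)] r(3) k_def by simp
  moreover have "Q \<subseteq> EH" "Q \<inter> set es = {}"
    unfolding Q_def using cycle_edges_subset[OF c'(1)] r(3,5) k_def by (auto dest: nth_mem)
  moreover have "es' ! r1 \<in> Q" "es' ! (r2 - 1) \<in> Q" unfolding Q_def using r(2) by auto
  moreover have "r1 < k" using r by simp
  then have "vs' ! r1 \<in> ends (es' ! r1)" "vs' ! r1 \<in> ends (es' ! (r1 - 1))"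
    using cycle_ends[OF c'(1), of r1] cycle_ends[OF c'(1), of "r1 - 1"] r(1) k k_def by auto
  moreover have "vs' ! (r2 mod k) \<in> ends (es' ! (r2 - 1))"
    using cycle_ends[OF c'(1), of "r2 - 1"] r k by (simp add: k_def)
  moreover have "vs' ! (r2 mod k) \<in> set vs"
  proof (cases "r2 = k")
    case True
    have "es' \<noteq> []" using k k_def by auto
    with True show ?thesis
      using cycle_ends[OF c'(1), of 0] cycle_ends_subset[OF c c'(2)] k by (auto simp: k_def)
  next
    case False
    then have "r2 < k" "es' ! r2 \<in> set es" using r by auto
    then show ?thesis using cycle_ends[OF c'(1), of r2] cycle_ends_subset[OF c] k by (auto simp: k_def)
  qed
  moreover have "vs' ! r1 \<noteq> vs' ! (r2 mod k)"
    using cycle_distinct[OF c'(1)] r k by (cases "r2 = k") (auto simp: nth_eq_iff_index_eq)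
  ultimately show ?thesis
    using that cycle_ends_subset[OF c r(4)] by blast
qed

lemma K4_minor_of_long_cycle_and_meeting_cycle:
  assumes c: "cycle vs es" "3 \<le> length es" and c': "cycle vs' es'"
    and meet: "set es' \<inter> set es \<noteq> {}" and out: "x \<in> set es'" "x \<notin> set es"
  shows "has_Kt_minor 4 EH (line_edges EH ends)"
proof -
  obtain y where "y \<in> set es'" "y \<in> set es" using meet by blast
  then obtain r where r: "r < length es'" "es' ! r \<in> set es" by (metis in_set_conv_nth)
  have "cycle (rotate r vs') (rotate r es')" by (rule cycle_rotate[OF c'])
  moreover have "es' \<noteq> []" using r(1) by auto
  then have "rotate r es' ! 0 \<in> set es" using r nth_rotate[of 0 es' r] by simp
  moreover have "x \<in> set (rotate r es')" using out by simp
  ultimately obtain Q q1 q2 \<alpha> \<beta> where "connected_in (line_edges EH ends) Q" "Q \<subseteq> EH" "Q \<inter> set es = {}"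
    "q1 \<in> Q" "q2 \<in> Q" "\<alpha> \<in> ends q1" "\<beta> \<in> ends q2" "\<alpha> \<in> set vs" "\<beta> \<in> set vs" "\<alpha> \<noteq> \<beta>"
    using cycle_ear[OF c(1)] out(2) by metis
  then show ?thesis by (rule K4_minor_of_cycle_with_ear[OF c])
qed

text \<open>Of two distinct cycles sharing an edge, take a long one; if the other lies inside it, the other
  is long as well, since a digon never lies inside a longer cycle.\<close>

lemma line_graph_K4_minor_if_overlapping_cycles:
  assumes "overlapping_cycles VH EH ends"
  shows "has_Kt_minor 4 EH (line_edges EH ends)"
proof -
  have *: "has_Kt_minor 4 EH (line_edges EH ends)"
    if c1: "cycle vs1 es1" "3 \<le> length es1" and c2: "cycle vs2 es2"
      and ne: "set es1 \<noteq> set es2" and meet: "set es1 \<inter> set es2 \<noteq> {}" for vs1 es1 vs2 es2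
  proof (cases "set es2 \<subseteq> set es1")
    case False
    then show ?thesis
      using K4_minor_of_long_cycle_and_meeting_cycle[OF c1 c2] meet by (blast intro: inf_commute)
  next
    case True
    then obtain x where x: "x \<in> set es1" "x \<notin> set es2" using ne by blast
    have "length es2 \<noteq> 2" using digon_not_within_long_cycle[OF c1 c2] True by blast
    then have "3 \<le> length es2" using cycle_length_ge_2[OF c2] by simp
    then show ?thesis using K4_minor_of_long_cycle_and_meeting_cycle[OF c2 _ c1(1) _ x] meet by blast
  qed
  from assms obtain C1 C2 where C: "is_cycle VH EH ends C1" "is_cycle VH EH ends C2" "C1 \<noteq> C2"
    "C1 \<inter> C2 \<noteq> {}" "card C1 \<noteq> 2 \<or> card C2 \<noteq> 2"
    unfolding overlapping_cycles_def by blast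
  then obtain vs1 es1 vs2 es2 where c: "cycle vs1 es1" "set es1 = C1" "cycle vs2 es2" "set es2 = C2"
    unfolding is_cycle_iff_cycle_seq by blast
  then have "card C1 = length es1" "card C2 = length es2" "2 \<le> length es1" "2 \<le> length es2"
    using card_cycle cycle_length_ge_2 by blast+
  then show ?thesis
    using C(3-5) *[OF c(1) _ c(3)] *[OF c(3) _ c(1)] c(2,4) by (force simp: Int_commute)
qed

end

section \<open>\<open>K\<^sub>4\<close>-immersions in graphs of maximum degree four\<close>

lemma sum_card_incident_path_edges_le:
  assumes "finite I" "\<And>\<pi>. \<pi> \<in> I \<Longrightarrow> path_edges (p \<pi>) \<subseteq> E"
    "\<And>\<pi> \<rho>. \<pi> \<in> I \<Longrightarrow> \<rho> \<in> I \<Longrightarrow> \<pi> \<noteq> \<rho> \<Longrightarrow> path_edges (p \<pi>) \<inter> path_edges (p \<rho>) = {}"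
    "finite {f \<in> E. x \<in> f}"
  shows "(\<Sum>\<pi>\<in>I. card {f \<in> path_edges (p \<pi>). x \<in> f}) \<le> card {f \<in> E. x \<in> f}"
proof -
  have "finite {f \<in> path_edges q. x \<in> f}" for q
    using finite_path_edges[of q] by (rule finite_subset[rotated]) auto
  then have "(\<Sum>\<pi>\<in>I. card {f \<in> path_edges (p \<pi>). x \<in> f}) = card (\<Union>\<pi>\<in>I. {f \<in> path_edges (p \<pi>). x \<in> f})"
    using assms(1,3) by (intro card_UN_disjoint[symmetric]) auto
  also have "\<dots> \<le> card {f \<in> E. x \<in> f}"
    using assms(2,4) by (intro card_mono) auto
  finally show ?thesis .
qed

lemma card_incident_path_edges_ge_1:
  assumes p: "is_path E p a b" "a \<noteq> b" and x: "x \<in> set p"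
  shows "1 \<le> card {f \<in> path_edges p. x \<in> f}"
proof -
  have "2 \<le> length p" using is_path_length_ge_2[OF p] .
  then have "\<exists>f. f \<in> path_edges p \<and> x \<in> f"
    using first_edge_in_path_edges[OF p(1)] last_edge_in_path_edges[OF p(1)]
      interior_vertex_two_path_edges[OF p(1) x] by (cases "x = a"; cases "x = b") auto
  then show ?thesis
    using finite_path_edges[of p] by (auto simp: Suc_le_eq card_gt_0_iff)
qed

lemma card_incident_path_edges_ge_2:
  assumes "is_path E p a b" "x \<in> set p" "x \<noteq> a" "x \<noteq> b"
  shows "2 \<le> card {f \<in> path_edges p. x \<in> f}"
proof -
  obtain f1 f2 where "f1 \<in> path_edges p" "f2 \<in> path_edges p" "f1 \<noteq> f2" "x \<in> f1" "x \<in> f2"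
    using interior_vertex_two_path_edges[OF assms] .
  then have "card {f1, f2} \<le> card {f \<in> path_edges p. x \<in> f}"
    using finite_path_edges[of p] by (intro card_mono) auto
  with \<open>f1 \<noteq> f2\<close> show ?thesis by simp
qed

locale K4_immersion =
  fixes E :: "'a set set" and \<phi> :: "nat \<Rightarrow> 'a" and P :: "nat \<Rightarrow> nat \<Rightarrow> 'a list"
  assumes terminals_inj: "inj_on \<phi> {..<4}"
    and paths: "\<And>i j. i < j \<Longrightarrow> j < 4 \<Longrightarrow> is_path E (P i j) (\<phi> i) (\<phi> j)"
    and paths_disjoint: "\<And>i j i' j'. i < j \<Longrightarrow> j < 4 \<Longrightarrow> i' < j' \<Longrightarrow> j' < 4 \<Longrightarrow> (i, j) \<noteq> (i', j') \<Longrightarrow>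
      path_edges (P i j) \<inter> path_edges (P i' j') = {}"
begin

lemma ends_on_path: "i < j \<Longrightarrow> j < 4 \<Longrightarrow> \<phi> i \<in> set (P i j) \<and> \<phi> j \<in> set (P i j)"
  using paths unfolding is_path_def by (metis hd_in_set last_in_set)

lemma terminals_distinct: "i < 4 \<Longrightarrow> j < 4 \<Longrightarrow> i \<noteq> j \<Longrightarrow> \<phi> i \<noteq> \<phi> j"
  using terminals_inj by (auto simp: inj_on_def)

definition route :: "nat \<Rightarrow> nat \<Rightarrow> 'a list" where
  "route i j = (if i < j then P i j else rev (P j i))"

lemma route_path:
  assumes "i < 4" "j < 4" "i \<noteq> j"
  shows "is_path E (route i j) (\<phi> i) (\<phi> j)"
proof (cases "i < j")
  case False
  then have "j < i" using assms(3) by simp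
  then show ?thesis using paths[of j i] is_path_rev assms(1) by (simp add: route_def)
qed (use paths assms in \<open>simp add: route_def\<close>)

lemma set_route: "set (route i j) = set (P (min i j) (max i j))"
  unfolding route_def by auto

lemma set_route_commute: "set (route i j) = set (route j i)"
  unfolding set_route by (simp add: min.commute max.commute)

lemma route_edges: "path_edges (route i j) = path_edges (P (min i j) (max i j))"
  unfolding route_def by auto

lemma route_edges_disjoint:
  assumes "i < 4" "j < 4" "i' < 4" "j' < 4" "i \<noteq> j" "i' \<noteq> j'" "{i, j} \<noteq> {i', j'}"
  shows "path_edges (route i j) \<inter> path_edges (route i' j') = {}"
  unfolding route_edges using assms
  by (intro paths_disjoint) (auto simp: min_def max_def doubleton_eq_iff split: if_splits)

definition first_step :: "nat \<Rightarrow> nat \<Rightarrow> 'a" where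
  "first_step m a = route m a ! 1"

lemma first_step_edge:
  assumes "m < 4" "a < 4" "a \<noteq> m"
  shows "{\<phi> m, first_step m a} \<in> path_edges (route m a)"
  unfolding first_step_def using assms route_path terminals_distinct
  by (intro first_edge_in_path_edges is_path_length_ge_2) auto

lemma first_step_inj:
  assumes "m < 4" "a < 4" "b < 4" "a \<noteq> m" "b \<noteq> m" "first_step m a = first_step m b"
  shows "a = b"
proof (rule ccontr)
  assume "a \<noteq> b"
  then have "path_edges (route m a) \<inter> path_edges (route m b) = {}"
    using assms by (intro route_edges_disjoint) (auto simp: doubleton_eq_iff)
  with first_step_edge[of m a] first_step_edge[of m b] assms show False by auto
qed

end

locale subquartic_K4_immersion = K4_immersion +
  assumes finite_incident: "finite {f \<in> E. x \<in> f}"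
    and degree_le_4: "card {f \<in> E. x \<in> f} \<le> 4"
begin

lemma incident_path_edges_sum_le_4:
  assumes "S \<subseteq> {(i, j). i < j \<and> j < 4}"
  shows "(\<Sum>\<pi>\<in>S. card {f \<in> path_edges (P (fst \<pi>) (snd \<pi>)). x \<in> f}) \<le> 4"
proof -
  have "finite S" using assms by (rule finite_subset) (auto intro: finite_subset[of _ "{..<4} \<times> {..<4}"])
  moreover have "path_edges (P (fst \<pi>) (snd \<pi>)) \<subseteq> E" if "\<pi> \<in> S" for \<pi>
  proof -
    have "fst \<pi> < snd \<pi>" "snd \<pi> < 4" using that assms by auto
    then show ?thesis by (rule path_edges_subset[OF paths])
  qed
  moreover have "path_edges (P (fst \<pi>) (snd \<pi>)) \<inter> path_edges (P (fst \<rho>) (snd \<rho>)) = {}"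
    if "\<pi> \<in> S" "\<rho> \<in> S" "\<pi> \<noteq> \<rho>" for \<pi> \<rho>
    using that assms by (intro paths_disjoint) (auto simp: prod_eq_iff)
  ultimately have "(\<Sum>\<pi>\<in>S. card {f \<in> path_edges (P (fst \<pi>) (snd \<pi>)). x \<in> f}) \<le> card {f \<in> E. x \<in> f}"
    using finite_incident by (intro sum_card_incident_path_edges_le)
  with degree_le_4[of x] show ?thesis by linarith
qed

text \<open>Each of the three paths ending at a terminal uses an edge at it, so a fourth path passing
  through would need two more edges.\<close>

lemma terminal_not_on_other_path:
  assumes m: "m < 4" and ij: "i < j" "j < 4" "m \<noteq> i" "m \<noteq> j"
  shows "\<phi> m \<notin> set (P i j)"
proof
  assume on_path: "\<phi> m \<in> set (P i j)"
  define T where "T = (\<lambda>a. (min m a, max m a)) ` ({..<4} - {m})"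
  have "inj_on (\<lambda>a. (min m a, max m a)) ({..<4} - {m})"
    by (auto simp: inj_on_def min_def max_def split: if_splits)
  then have "card T = 3" unfolding T_def using m by (simp add: card_image)
  have T: "T \<subseteq> {(i, j). i < j \<and> j < 4}" "(i, j) \<notin> T"
    unfolding T_def using m ij by (auto simp: min_def max_def split: if_splits)
  have "1 \<le> card {f \<in> path_edges (P (fst \<pi>) (snd \<pi>)). \<phi> m \<in> f}" if \<pi>: "\<pi> \<in> T" for \<pi>
  proof -
    obtain c where c: "c < 4" "c \<noteq> m" "\<pi> = (min m c, max m c)" using \<pi> unfolding T_def by auto
    have "\<phi> m \<in> set (P (min m c) (max m c))"
    proof (cases "m < c")
      case True
      then show ?thesis using ends_on_path[of m c] c by (simp add: min_def max_def)
    next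
      case False
      then have "c < m" using c(2) by simp
      then show ?thesis using ends_on_path[of c m] m by (simp add: min_def max_def)
    qed
    moreover have "min m c < max m c" "max m c < 4" using c m by auto
    ultimately show ?thesis
      using card_incident_path_edges_ge_1[OF paths terminals_distinct] c(3) by simp
  qed
  then have "card T * 1 \<le> (\<Sum>\<pi>\<in>T. card {f \<in> path_edges (P (fst \<pi>) (snd \<pi>)). \<phi> m \<in> f})"
    using sum_bounded_below[of T "1::nat"] by simp
  moreover have "2 \<le> card {f \<in> path_edges (P i j). \<phi> m \<in> f}"
    using ij m on_path paths terminals_distinct by (intro card_incident_path_edges_ge_2) auto
  moreover have "(\<Sum>\<pi>\<in>insert (i, j) T. card {f \<in> path_edges (P (fst \<pi>) (snd \<pi>)). \<phi> m \<in> f}) \<le> 4"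
    using T ij by (intro incident_path_edges_sum_le_4) auto
  moreover have "finite T" using \<open>card T = 3\<close> by (simp add: card_ge_0_finite)
  ultimately show False using T(2) \<open>card T = 3\<close> by simp
qed

lemma nonterminal_on_at_most_two_paths:
  assumes x: "x \<notin> \<phi> ` {..<4}"
    and S: "S \<subseteq> {(i, j). i < j \<and> j < 4}" "\<And>\<pi>. \<pi> \<in> S \<Longrightarrow> x \<in> set (P (fst \<pi>) (snd \<pi>))"
  shows "card S \<le> 2"
proof -
  have "2 \<le> card {f \<in> path_edges (P (fst \<pi>) (snd \<pi>)). x \<in> f}" if "\<pi> \<in> S" for \<pi>
  proof -
    have "fst \<pi> < snd \<pi>" "snd \<pi> < 4" using that S(1) by auto
    moreover have "x \<noteq> \<phi> (fst \<pi>)" "x \<noteq> \<phi> (snd \<pi>)" using x calculation by auto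
    ultimately show ?thesis using card_incident_path_edges_ge_2[OF paths S(2)[OF that]] by simp
  qed
  then have "card S * 2 \<le> (\<Sum>\<pi>\<in>S. card {f \<in> path_edges (P (fst \<pi>) (snd \<pi>)). x \<in> f})"
    using sum_bounded_below[of S "2::nat"] by simp
  with incident_path_edges_sum_le_4[OF S(1), of x] show ?thesis by linarith
qed

lemma nonterminal_not_on_three_routes:
  assumes x: "x \<notin> \<phi> ` {..<4}"
    and idx: "a < 4" "b < 4" "c < 4" "d < 4" "e < 4" "f < 4" "a \<noteq> b" "c \<noteq> d" "e \<noteq> f"
    and pairs: "{a, b} \<noteq> {c, d}" "{a, b} \<noteq> {e, f}" "{c, d} \<noteq> {e, f}"
    and on: "x \<in> set (route a b)" "x \<in> set (route c d)" "x \<in> set (route e f)"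
  shows False
proof -
  define S where "S = {(min a b, max a b), (min c d, max c d), (min e f, max e f)}"
  have sorted_eq: "(min i j, max i j) = (min i' j', max i' j') \<longleftrightarrow> {i, j} = {i', j'}" for i j i' j' :: nat
    by (auto simp: min_def max_def doubleton_eq_iff)
  have "card S = 3" unfolding S_def using pairs sorted_eq by (simp add: card_insert_if)
  moreover have "card S \<le> 2"
    using idx on unfolding S_def set_route
    by (intro nonterminal_on_at_most_two_paths[OF x]) (auto simp: min_def max_def)
  ultimately show False by simp
qed

end

locale subcubic_multigraph = loopless_multigraph +
  assumes degree_le_3: "card {e \<in> EH. w \<in> ends e} \<le> 3"
begin

lemma line_graph_degree_le_4:
  "finite {f \<in> line_edges EH ends. x \<in> f} \<and> card {f \<in> line_edges EH ends. x \<in> f} \<le> 4"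
proof (cases "x \<in> EH")
  case True
  obtain p q where pq: "ends x = {p, q}" using ends_obtain[OF True] by metis
  define A where "A w = {e \<in> EH. w \<in> ends e} - {x}" for w
  have "finite (A w)" "card (A w) \<le> 2" if "w \<in> ends x" for w
    using degree_le_3[of w] that True finite_EH unfolding A_def by (auto simp: card_Diff_singleton)
  then have "finite (A p)" "finite (A q)" "card (A p) \<le> 2" "card (A q) \<le> 2" using pq by auto
  then have fin: "finite (A p \<union> A q)" and card: "card (A p \<union> A q) \<le> 4"
    using card_Un_le[of "A p" "A q"] by auto
  have "{f \<in> line_edges EH ends. x \<in> f} \<subseteq> (\<lambda>y. {x, y}) ` (A p \<union> A q)"
  proof
    fix f assume "f \<in> {f \<in> line_edges EH ends. x \<in> f}"
    then obtain y where "f = {x, y}" "y \<in> EH" "y \<noteq> x" "ends x \<inter> ends y \<noteq> {}"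
      by (auto elim!: line_edgesE simp: insert_commute inf_commute)
    then show "f \<in> (\<lambda>y. {x, y}) ` (A p \<union> A q)" using pq unfolding A_def by auto
  qed
  moreover have "card ((\<lambda>y. {x, y}) ` (A p \<union> A q)) \<le> 4"
    using card_image_le[OF fin] card by (meson le_trans)
  ultimately show ?thesis using fin by (meson card_mono finite_imageI finite_subset le_trans)
next
  case False
  then have empty: "{f \<in> line_edges EH ends. x \<in> f} = {}" by (auto elim!: line_edgesE)
  show ?thesis unfolding empty by simp
qed

lemma edge_at_vertex_among_three:
  assumes "a \<in> EH" "b \<in> EH" "c \<in> EH" "a \<noteq> b" "a \<noteq> c" "b \<noteq> c"
    "w \<in> ends a" "w \<in> ends b" "w \<in> ends c" "y \<in> EH" "w \<in> ends y"
  shows "y \<in> {a, b, c}"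
proof -
  have "{a, b, c} \<subseteq> {e \<in> EH. w \<in> ends e}" using assms by auto
  moreover have "card {a, b, c} = 3" using assms by simp
  ultimately have "{a, b, c} = {e \<in> EH. w \<in> ends e}"
    using finite_EH degree_le_3[of w] by (intro card_seteq) auto
  then show ?thesis using assms by auto
qed

lemma edge_at_cycle_vertex:
  assumes c: "cycle vs es" and w: "w \<in> set vs"
    and x: "x \<in> EH" "x \<notin> set es" "w \<in> ends x" and y: "y \<in> EH" "y \<noteq> x" "w \<in> ends y"
  shows "y \<in> set es"
proof -
  obtain e1 e2 where "e1 \<in> set es" "e2 \<in> set es" "e1 \<noteq> e2" "w \<in> ends e1" "w \<in> ends e2"
    using cycle_vertex_two_edges[OF c w] .
  with x y cycle_edges_subset[OF c] show ?thesis
    using edge_at_vertex_among_three[of e1 e2 x w y] by auto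
qed

definition no_edge_parallel_to_digon where
  "no_edge_parallel_to_digon es \<longleftrightarrow>
     (card (set es) = 2 \<longrightarrow> (\<forall>x\<in>EH - set es. \<forall>d\<in>set es. ends x \<noteq> ends d))"

text \<open>An edge leaving a cycle lies on no cycle: such a cycle would share with the first one the
  other edge at the common vertex, so both would be digons, making the edge parallel to a digon.\<close>

lemma edge_leaving_cycle_is_bridge:
  assumes no_overlap: "\<not> overlapping_cycles VH EH ends"
    and c: "cycle vs es" and par: "no_edge_parallel_to_digon es"
    and x: "x \<in> EH" "x \<notin> set es" and w: "w \<in> ends x" "w \<in> set vs" "w' \<in> ends x" "w' \<noteq> w"
  shows "\<not> reach ends (EH - {x}) w w'"
proof
  assume r: "reach ends (EH - {x}) w w'"
  obtain a b where "a \<noteq> b" "ends x = {a, b}" using ends_obtain[OF x(1)] .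
  then have ex: "ends x = {w, w'}" using w(1,3,4) by auto
  obtain vs' es' where c': "cycle vs' es'" "x \<in> set es'"
    using cycle_through_edge[OF x(1) ex _ _ r] by blast
  obtain y where y: "y \<in> set es'" "y \<noteq> x" "w \<in> ends y"
    using cycle_vertex_two_edges[OF c'(1)] cycle_ends_subset[OF c'] w(1) by (metis subsetD)
  have "y \<in> EH" using y cycle_edges_subset[OF c'(1)] by blast
  then have "y \<in> set es" using edge_at_cycle_vertex[OF c w(2) x w(1)] y by blast
  have "is_cycle VH EH ends (set es)" "is_cycle VH EH ends (set es')"
    using c c'(1) unfolding is_cycle_iff_cycle_seq by blast+
  moreover have "set es \<noteq> set es'" "set es \<inter> set es' \<noteq> {}" using x(2) c'(2) y(1) \<open>y \<in> set es\<close> by blast+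
  ultimately have "card (set es) = 2" "card (set es') = 2"
    using no_overlap unfolding overlapping_cycles_def by blast+
  then have "length es' = 2" using card_cycle[OF c'(1)] by simp
  then have "set es' = {es' ! 0, es' ! 1}" "ends (es' ! 0) = ends (es' ! 1)"
    using digon_parallel[OF c'(1)] by (auto simp: set_conv_nth less_2_cases_iff)
  then have "ends x = ends y" using c'(2) y(1,2) by auto
  then show False
    using par \<open>card (set es) = 2\<close> x \<open>y \<in> set es\<close> unfolding no_edge_parallel_to_digon_def by blast
qed

lemma edge_leaving_cycle_unique:
  assumes no_overlap: "\<not> overlapping_cycles VH EH ends"
    and c: "cycle vs es" and par: "no_edge_parallel_to_digon es"
    and s: "s \<in> EH" "ends s = {w, w'}" "w \<in> set vs" "w' \<notin> set vs"
      "reach ends {e \<in> EH. ends e \<inter> set vs = {}} w' z"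
    and s': "s' \<in> EH" "ends s' = {v, v'}" "v \<in> set vs" "v' \<notin> set vs"
      "reach ends {e \<in> EH. ends e \<inter> set vs = {}} v' z"
  shows "s = s'"
proof (rule ccontr)
  assume "s \<noteq> s'"
  have avoid: "{e \<in> EH. ends e \<inter> set vs = {}} \<subseteq> EH - {s}" using s by auto
  have "s \<notin> set es" using cycle_ends_subset[OF c, of s] s(2,4) by auto
  then have "set es \<subseteq> EH - {s}" using cycle_edges_subset[OF c] by blast
  then have "reach ends (EH - {s}) v w" by (rule reach_mono[OF cycle_reach[OF c s'(3) s(3)]])
  moreover have "reach ends (EH - {s}) v' v"
    using s' \<open>s \<noteq> s'\<close> by (intro reach_edge[of s']) (auto simp: insert_commute)
  moreover have "reach ends (EH - {s}) w' v'"
    using s(5) s'(5) avoid by (meson reach_mono reach_sym reach_trans)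
  ultimately have "reach ends (EH - {s}) w w'" by (meson reach_sym reach_trans)
  moreover have "\<not> reach ends (EH - {s}) w w'"
    using s \<open>s \<notin> set es\<close> by (intro edge_leaving_cycle_is_bridge[OF no_overlap c par]) auto
  ultimately show False by blast
qed

lemma edge_leaving_cycle_on_every_walk:
  assumes no_overlap: "\<not> overlapping_cycles VH EH ends"
    and c: "cycle vs es" and par: "no_edge_parallel_to_digon es"
    and s: "s \<in> EH" "ends s = {w, w'}" "w \<in> set vs" "w' \<notin> set vs"
      "reach ends {e \<in> EH. ends e \<inter> set vs = {}} w' z"
    and W: "W \<subseteq> EH" "reach ends W y z" "y \<in> set vs" "z \<notin> set vs"
  shows "s \<in> W"
proof -
  obtain s' v v' where s': "s' \<in> W" "ends s' = {v, v'}" "v \<in> set vs" "v' \<notin> set vs"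
    "reach ends {e \<in> W. ends e \<inter> set vs = {}} v' z"
    using reach_exit[OF W(2-4)] by blast
  moreover have "{e \<in> W. ends e \<inter> set vs = {}} \<subseteq> {e \<in> EH. ends e \<inter> set vs = {}}" using W(1) by blast
  then have "reach ends {e \<in> EH. ends e \<inter> set vs = {}} v' z" using s'(5) by (rule reach_mono[rotated])
  moreover have "s' \<in> EH" using s'(1) W(1) by blast
  ultimately have "s = s'" using edge_leaving_cycle_unique[OF no_overlap c par s] s'(2-4) by blast
  with s'(1) show ?thesis by simp
qed

end

section \<open>\<open>K\<^sub>4\<close>-immersions in line graphs of subcubic multigraphs\<close>

lemma inj_on_lessThan_4_increasing:
  fixes f :: "nat \<Rightarrow> 'b::linorder"
  assumes "inj_on f {..<4}"
  obtains a b c d where "a < 4" "b < 4" "c < 4" "d < 4" "f a < f b" "f b < f c" "f c < f d"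
proof -
  obtain l where l: "sorted_wrt (<) l" "set l = f ` {..<4}" "length l = 4"
    using finite_set_strict_sorted[of "f ` {..<4}"] card_image[OF assms] by auto
  have pre: "\<exists>a<4. f a = l ! i" if "i < 4" for i
    using nth_mem[of i l] l(2,3) that by (metis imageE lessThan_iff)
  obtain a b c d where "a < 4" "f a = l ! 0" "b < 4" "f b = l ! 1" "c < 4" "f c = l ! 2"
    "d < 4" "f d = l ! 3"
    using pre[of 0] pre[of 1] pre[of 2] pre[of 3] by auto
  moreover have "l ! 0 < l ! 1" "l ! 1 < l ! 2" "l ! 2 < l ! 3"
    using l(1,3) by (simp_all add: sorted_wrt_iff_nth_less)
  ultimately show ?thesis using that by simp
qed

locale line_graph_K4_immersion =
  subcubic_multigraph VH EH ends + K4_immersion "line_edges EH ends" \<phi> P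
  for VH :: "'v set" and EH :: "'e set" and ends :: "'e \<Rightarrow> 'v set"
    and \<phi> :: "nat \<Rightarrow> 'e" and P :: "nat \<Rightarrow> nat \<Rightarrow> 'e list"
begin

sublocale subquartic_K4_immersion "line_edges EH ends" \<phi> P
  using line_graph_degree_le_4 by unfold_locales auto

lemma first_step_adjacent:
  assumes "m < 4" "a < 4" "a \<noteq> m"
  shows "first_step m a \<in> EH" "first_step m a \<noteq> \<phi> m" "\<phi> m \<in> EH"
    "ends (first_step m a) \<inter> ends (\<phi> m) \<noteq> {}"
proof -
  have "{\<phi> m, first_step m a} \<in> line_edges EH ends"
    using first_step_edge[OF assms] path_edges_subset[OF route_path] assms by blast
  then show "first_step m a \<in> EH" "first_step m a \<noteq> \<phi> m" "\<phi> m \<in> EH"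
    "ends (first_step m a) \<inter> ends (\<phi> m) \<noteq> {}"
    by (auto simp: in_line_edges_iff)
qed

lemma terminal_in_EH: "m < 4 \<Longrightarrow> \<phi> m \<in> EH"
  using first_step_adjacent(3)[of m "if m = 0 then 1 else 0"] by auto

lemma route_reach:
  assumes "i < 4" "j < 4" "i \<noteq> j" "y \<in> ends (\<phi> i)" "z \<in> ends (\<phi> j)"
  shows "set (route i j) \<subseteq> EH \<and> reach ends (set (route i j)) y z"
  using line_path_reach[OF route_path terminal_in_EH] assms by blast

lemma reach_from_first_step:
  assumes "m < 4" "a < 4" "a \<noteq> m" "y \<in> ends (first_step m a)" "z \<in> ends (\<phi> a)"
  shows "reach ends (EH - {\<phi> m}) y z"
proof -
  have p: "is_path (line_edges EH ends) (route m a) (\<phi> m) (\<phi> a)" using route_path assms by simp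
  have "2 \<le> length (route m a)" using is_path_length_ge_2[OF p] terminals_distinct assms by simp
  then have "is_path (line_edges EH ends) (tl (route m a)) (first_step m a) (\<phi> a)"
    using is_path_tl[OF p] unfolding first_step_def by simp
  then have "set (tl (route m a)) \<subseteq> EH \<and> reach ends (set (tl (route m a))) y z"
    using line_path_reach first_step_adjacent(1) assms by blast
  moreover have "\<phi> m \<notin> set (tl (route m a))"
    using p unfolding is_path_def by (cases "route m a") auto
  ultimately show ?thesis by (blast intro: reach_mono)
qed

lemma reach_between_other_terminals:
  assumes "m < 4" "a < 4" "b < 4" "a \<noteq> m" "b \<noteq> m" "a \<noteq> b" "y \<in> ends (\<phi> a)" "z \<in> ends (\<phi> b)"
  shows "reach ends (EH - {\<phi> m}) y z"
proof -
  have "set (route a b) \<subseteq> EH \<and> reach ends (set (route a b)) y z" using route_reach assms by blast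
  moreover have "\<phi> m \<notin> set (route a b)"
    unfolding set_route using terminal_not_on_other_path[of m "min a b" "max a b"] assms
    by (auto simp: min_def max_def)
  ultimately show ?thesis by (blast intro: reach_mono)
qed

text \<open>The three first steps out of a terminal share an end with it, and by the degree bound they
  cannot all avoid one of its two ends.\<close>

lemma first_step_at_terminal_end:
  assumes m: "m < 4" and u: "u \<in> ends (\<phi> m)"
  obtains a where "a < 4" "a \<noteq> m" "u \<in> ends (first_step m a)"
proof -
  have "\<exists>a<4. a \<noteq> m \<and> u \<in> ends (first_step m a)"
  proof (rule ccontr)
    assume none: "\<not> ?thesis"
    obtain v where v: "ends (\<phi> m) = {u, v}" "u \<noteq> v"
      using other_end[OF terminal_in_EH[OF m] u] .
    define Others where "Others = {..<4} - {m}"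
    have "first_step m a \<in> {e \<in> EH. v \<in> ends e}" if "a \<in> Others" for a
      using first_step_adjacent[of m a] none that v m unfolding Others_def by auto
    moreover have "\<phi> m \<in> {e \<in> EH. v \<in> ends e}" using terminal_in_EH[OF m] v by auto
    ultimately have sub: "insert (\<phi> m) (first_step m ` Others) \<subseteq> {e \<in> EH. v \<in> ends e}" by blast
    have "inj_on (first_step m) Others"
      using first_step_inj m unfolding Others_def by (auto intro: inj_onI)
    then have "card (first_step m ` Others) = 3" using m unfolding Others_def by (simp add: card_image)
    moreover have "first_step m a \<noteq> \<phi> m" if "a \<in> Others" for a
      using first_step_adjacent(2)[of m a] that m unfolding Others_def by auto
    then have "\<phi> m \<notin> first_step m ` Others" by (metis imageE)
    ultimately have "card (insert (\<phi> m) (first_step m ` Others)) = 4" by (simp add: Others_def)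
    then have "4 \<le> card {e \<in> EH. v \<in> ends e}"
      using card_mono[OF _ sub] finite_EH by simp
    then show False using degree_le_3[of v] by simp
  qed
  then show ?thesis using that by blast
qed

lemma terminal_ends_reach:
  assumes m: "m < 4" and yz: "y \<in> ends (\<phi> m)" "z \<in> ends (\<phi> m)"
  shows "reach ends (EH - {\<phi> m}) y z"
proof -
  obtain a where a: "a < 4" "a \<noteq> m" "y \<in> ends (first_step m a)"
    using first_step_at_terminal_end[OF m yz(1)] .
  obtain b where b: "b < 4" "b \<noteq> m" "z \<in> ends (first_step m b)"
    using first_step_at_terminal_end[OF m yz(2)] .
  obtain ya where ya: "ya \<in> ends (\<phi> a)" using ends_obtain terminal_in_EH a(1) by (metis insertI1)
  obtain zb where zb: "zb \<in> ends (\<phi> b)" using ends_obtain terminal_in_EH b(1) by (metis insertI1)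
  have "reach ends (EH - {\<phi> m}) y ya" "reach ends (EH - {\<phi> m}) z zb"
    using reach_from_first_step m a b ya zb by blast+
  moreover have "reach ends (EH - {\<phi> m}) ya zb"
  proof (cases "a = b")
    case True
    then show ?thesis using terminals_distinct[OF b(1) m b(2)] terminal_in_EH[OF b(1)] ya zb
      by (intro reach_within_edge[of "\<phi> b"]) auto
  qed (use reach_between_other_terminals[OF m a(1) b(1) a(2) b(2) _ ya zb] in blast)
  ultimately show ?thesis by (meson reach_sym reach_trans)
qed

text \<open>The three first steps out of a terminal are distinct neighbours sharing an end with it,
  whereas two further edges parallel to it would exhaust the degree at its ends.\<close>

lemma terminal_not_in_three_parallel_edges:
  assumes m: "m < 4" and par: "g \<in> EH" "x \<in> EH" "g \<noteq> \<phi> m" "x \<noteq> \<phi> m" "g \<noteq> x"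
    "ends g = ends (\<phi> m)" "ends x = ends (\<phi> m)"
  shows False
proof -
  define Others where "Others = {..<4} - {m}"
  have "first_step m a \<in> {g, x}" if a: "a \<in> Others" for a
  proof -
    obtain w where "w \<in> ends (first_step m a)" "w \<in> ends (\<phi> m)"
      using first_step_adjacent(4)[of m a] a m unfolding Others_def by auto
    then show ?thesis
      using edge_at_vertex_among_three[of "\<phi> m" g x w "first_step m a"] first_step_adjacent[of m a]
        terminal_in_EH[OF m] par a m unfolding Others_def by auto
  qed
  then have "first_step m ` Others \<subseteq> {g, x}" by blast
  moreover have "inj_on (first_step m) Others"
    using first_step_inj m unfolding Others_def by (auto intro: inj_onI)
  then have "card (first_step m ` Others) = 3" using m unfolding Others_def by (simp add: card_image)
  ultimately have "3 \<le> card {g, x}" using card_mono[of "{g, x}" "first_step m ` Others"] by simp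
  then show False by (simp add: card_insert_if split: if_splits)
qed

lemma no_edge_parallel_to_digon_through_terminal:
  assumes c: "cycle vs es" and m: "m < 4" "\<phi> m \<in> set es"
  shows "no_edge_parallel_to_digon es"
  unfolding no_edge_parallel_to_digon_def
proof (intro impI ballI notI)
  fix x d assume two: "card (set es) = 2" and x: "x \<in> EH - set es" and d: "d \<in> set es"
    and par: "ends x = ends d"
  have "length es = 2" using two card_cycle[OF c] by simp
  then have es: "set es = {es ! 0, es ! 1}" "es ! 0 \<noteq> es ! 1" "ends (es ! 0) = ends (es ! 1)"
    using digon_parallel[OF c] cycle_distinct[OF c]
    by (auto simp: set_conv_nth less_2_cases_iff nth_eq_iff_index_eq)
  define g where "g = (if es ! 0 = \<phi> m then es ! 1 else es ! 0)"
  have "set es = {\<phi> m, g} \<and> g \<noteq> \<phi> m \<and> ends g = ends (\<phi> m)"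
  proof (cases "es ! 0 = \<phi> m")
    case True
    then show ?thesis using es unfolding g_def by simp
  next
    case False
    then have "es ! 1 = \<phi> m" using es(1) m(2) by auto
    then show ?thesis using es False unfolding g_def by (simp add: insert_commute)
  qed
  then show False
    using terminal_not_in_three_parallel_edges[OF m(1), of g x] x d par cycle_edges_subset[OF c] by auto
qed

lemma terminal_off_cycle_avoids_cycle:
  assumes no_overlap: "\<not> overlapping_cycles VH EH ends"
    and c: "cycle vs es" and par: "no_edge_parallel_to_digon es" and m: "m < 4" "\<phi> m \<notin> set es"
  shows "ends (\<phi> m) \<inter> set vs = {}"
proof (rule ccontr)
  assume "ends (\<phi> m) \<inter> set vs \<noteq> {}"
  then obtain w where w: "w \<in> ends (\<phi> m)" "w \<in> set vs" by blast
  obtain w' where "ends (\<phi> m) = {w, w'}" "w \<noteq> w'" using other_end[OF terminal_in_EH[OF m(1)] w(1)] .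
  then show False
    using terminal_ends_reach[OF m(1), of w w'] w terminal_in_EH[OF m(1)] m(2)
      edge_leaving_cycle_is_bridge[OF no_overlap c par, of "\<phi> m" w w'] by auto
qed

lemma edge_leaving_cycle_not_terminal:
  assumes no_overlap: "\<not> overlapping_cycles VH EH ends"
    and c: "cycle vs es" and par: "no_edge_parallel_to_digon es"
    and s: "s \<in> EH" "ends s = {w, w'}" "w \<in> set vs" "w' \<notin> set vs"
  shows "s \<notin> \<phi> ` {..<4}"
proof
  assume "s \<in> \<phi> ` {..<4}"
  then obtain i where i: "i < 4" "s = \<phi> i" by blast
  have "s \<notin> set es" using cycle_ends_subset[OF c, of s] s(2,4) by auto
  then show False
    using terminal_ends_reach[OF i(1), of w w'] edge_leaving_cycle_is_bridge[OF no_overlap c par s(1)]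
      s(2-4) i(2) by auto
qed

text \<open>Every route from the cycle to a terminal off the cycle leaves the cycle through one and
  the same edge; this edge is no terminal, yet it lies on three of the six paths.\<close>

lemma terminal_on_cycle:
  assumes no_overlap: "\<not> overlapping_cycles VH EH ends"
    and c: "cycle vs es" and par: "no_edge_parallel_to_digon es"
    and t0: "\<phi> 0 \<in> set es" and m: "0 < m" "m < 4"
  shows "\<phi> m \<in> set es"
proof (rule ccontr)
  assume off: "\<phi> m \<notin> set es"
  obtain y where y: "y \<in> ends (\<phi> 0)" using ends_obtain terminal_in_EH[of 0] by (metis insertI1 zero_less_numeral)
  then have y_on: "y \<in> set vs" using cycle_ends_subset[OF c t0] by blast
  obtain z where z: "z \<in> ends (\<phi> m)" using ends_obtain terminal_in_EH[OF m(2)] by (metis insertI1)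
  then have z_off: "z \<notin> set vs" using terminal_off_cycle_avoids_cycle[OF no_overlap c par m(2) off] by blast
  have route_0m: "set (route 0 m) \<subseteq> EH" "reach ends (set (route 0 m)) y z"
    using route_reach[of 0 m y z] m y z by simp_all
  then obtain s w w' where s: "s \<in> set (route 0 m)" "ends s = {w, w'}" "w \<in> set vs" "w' \<notin> set vs"
    "reach ends {e \<in> set (route 0 m). ends e \<inter> set vs = {}} w' z"
    using reach_exit[OF _ y_on z_off] by blast
  have s_EH: "s \<in> EH" using s(1) route_0m by auto
  have exit: "reach ends {e \<in> EH. ends e \<inter> set vs = {}} w' z"
    using s(5) route_0m(1) by (blast intro: reach_mono)
  have via: "\<exists>a\<in>{0, m}. s \<in> set (route a k)" if k: "k < 4" "k \<notin> {0, m}" for k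
  proof -
    obtain u where u: "u \<in> ends (\<phi> k)" using ends_obtain terminal_in_EH[OF k(1)] by (metis insertI1)
    have r1: "set (route 0 k) \<subseteq> EH" "reach ends (set (route 0 k)) y u"
      using route_reach[of 0 k y u] k y u by auto
    have r2: "set (route k m) \<subseteq> EH" "reach ends (set (route k m)) u z"
      using route_reach[of k m u z] k m z u by auto
    have "reach ends (set (route 0 k) \<union> set (route k m)) y z"
      by (rule reach_trans[OF reach_mono[OF r1(2)] reach_mono[OF r2(2)]]) auto
    moreover have "set (route 0 k) \<union> set (route k m) \<subseteq> EH" using r1(1) r2(1) by blast
    ultimately have "s \<in> set (route 0 k) \<union> set (route k m)"
      using edge_leaving_cycle_on_every_walk[OF no_overlap c par s_EH s(2-4) exit _ _ y_on z_off] by blast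
    then show ?thesis using set_route_commute by auto
  qed
  obtain k l where kl: "{..<4} - {0, m} = {k, l}" "k \<noteq> l"
    using card_2_iff[of "{..<4} - {0, m}"] m by auto
  then have k: "k < 4" "k \<notin> {0, m}" and l: "l < 4" "l \<notin> {0, m}" by blast+
  then obtain a b where a: "a \<in> {0, m}" "s \<in> set (route a k)" and b: "b \<in> {0, m}" "s \<in> set (route b l)"
    using via by blast
  have idx: "(0::nat) < 4" "m < 4" "a < 4" "k < 4" "b < 4" "l < 4" "0 \<noteq> m" "a \<noteq> k" "b \<noteq> l"
    using a(1) b(1) k l m by auto
  have pairs: "{0, m} \<noteq> {a, k}" "{0, m} \<noteq> {b, l}" "{a, k} \<noteq> {b, l}"
    using k l kl(2) b(1) by blast+
  show False
    by (rule nonterminal_not_on_three_routes[OF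
          edge_leaving_cycle_not_terminal[OF no_overlap c par s_EH s(2-4)] idx pairs s(1) a(2) b(2)])
qed

text \<open>The route between the terminals at positions px and py avoids the other two terminals, so
  together with the arcs of the cycle through pz it joins the ends of the terminal at pz
  without using the one at pw.\<close>

lemma terminals_on_cycle_not_interleaved:
  assumes no_overlap: "\<not> overlapping_cycles VH EH ends"
    and c: "cycle vs es" and long: "3 \<le> length es"
    and idx: "x < 4" "z < 4" "y < 4" "w < 4" "x \<noteq> z" "x \<noteq> y" "x \<noteq> w" "z \<noteq> y" "z \<noteq> w" "y \<noteq> w"
    and pos: "px < pz" "pz < py" "py < pw" "pw < length es"
    and at: "es ! px = \<phi> x" "es ! pz = \<phi> z" "es ! py = \<phi> y" "es ! pw = \<phi> w"
  shows False
proof -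
  define F where "F = EH - {\<phi> z, \<phi> w}"
  have lvs: "length vs = length es" using cycle_length[OF c] .
  have ex: "vs ! Suc px \<in> ends (\<phi> x)" and ez: "ends (\<phi> z) = {vs ! pz, vs ! Suc pz}"
    and ey: "vs ! py \<in> ends (\<phi> y)"
    using cycle_ends[OF c, of px] cycle_ends[OF c, of pz] cycle_ends[OF c, of py] at pos lvs by auto
  have "\<phi> z \<notin> set (route x y)" "\<phi> w \<notin> set (route x y)"
    unfolding set_route using terminal_not_on_other_path[of z "min x y" "max x y"]
      terminal_not_on_other_path[of w "min x y" "max x y"] idx
    by (auto simp: min_def max_def)
  then have "reach ends F (vs ! Suc px) (vs ! py)"
    using route_reach[of x y "vs ! Suc px" "vs ! py"] idx ex ey unfolding F_def
    by (blast intro: reach_mono)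
  moreover have "reach ends F (vs ! i) (vs ! j)" if "i \<le> j" "j \<le> pw" "pz \<notin> {i..<j}" for i j
  proof -
    have "es ! t \<in> F" if t: "t \<in> {i..<j}" for t
    proof -
      have "t < length es" "t \<noteq> pz" "t \<noteq> pw" using t \<open>j \<le> pw\<close> \<open>pz \<notin> _\<close> pos by auto
      then have "es ! t \<noteq> es ! pz" "es ! t \<noteq> es ! pw"
        using cycle_distinct[OF c] pos by (simp_all add: nth_eq_iff_index_eq)
      then show ?thesis using at cycle_edges_subset[OF c] \<open>t < length es\<close> unfolding F_def by auto
    qed
    then have "(!) es ` {i..<j} \<subseteq> F" by blast
    moreover have "j < length vs" using that pos lvs by simp
    ultimately show ?thesis using reach_mono[OF cycle_arc_reach[OF c \<open>i \<le> j\<close>]] by blast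
  qed
  then have "reach ends F (vs ! Suc px) (vs ! pz)" "reach ends F (vs ! Suc pz) (vs ! py)"
    using pos by auto
  ultimately have "reach ends (EH - {\<phi> z, \<phi> w}) (vs ! pz) (vs ! Suc pz)"
    unfolding F_def by (meson reach_sym reach_trans)
  then have "length es = 2"
    using cycle_is_digon_if_detour[OF no_overlap c _ ez _ terminals_distinct[OF idx(4,2) idx(9)[symmetric]]]
      at pos by (metis nth_mem order.strict_trans)
  with long show False by simp
qed

lemma terminals_on_common_cycle:
  assumes no_overlap: "\<not> overlapping_cycles VH EH ends"
  obtains vs es where "cycle vs es" "\<phi> ` {..<4} \<subseteq> set es"
proof -
  have "\<phi> 0 \<in> EH" using terminal_in_EH by simp
  then obtain u v where uv: "u \<noteq> v" "ends (\<phi> 0) = {u, v}" by (rule ends_obtain)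
  have "reach ends (EH - {\<phi> 0}) u v" using terminal_ends_reach[of 0 u v] uv by simp
  then obtain vs es where c: "cycle vs es" "\<phi> 0 \<in> set es"
    using cycle_through_edge[OF \<open>\<phi> 0 \<in> EH\<close> uv(2)] by blast
  have "no_edge_parallel_to_digon es"
    using no_edge_parallel_to_digon_through_terminal[OF c(1) _ c(2)] by simp
  then have "\<phi> m \<in> set es" if "m < 4" for m
    using terminal_on_cycle[OF no_overlap c(1) _ c(2)] c(2) that by (cases "m = 0") auto
  then show ?thesis using that c(1) by blast
qed

theorem K4_immersion_overlapping_cycles: "overlapping_cycles VH EH ends"
proof (rule ccontr)
  assume no_overlap: "\<not> overlapping_cycles VH EH ends"
  then obtain vs es where c: "cycle vs es" and on: "\<phi> ` {..<4} \<subseteq> set es"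
    by (rule terminals_on_common_cycle)
  have "4 \<le> length es"
    using card_mono[OF _ on] card_image[OF terminals_inj] card_cycle[OF c] by simp
  have "\<forall>j\<in>{..<4}. \<exists>p. p < length es \<and> es ! p = \<phi> j"
    using on by (auto simp: in_set_conv_nth)
  then obtain pos where pos: "\<And>j. j < 4 \<Longrightarrow> pos j < length es \<and> es ! pos j = \<phi> j"
    by (metis bchoice lessThan_iff)
  have "inj_on pos {..<4}" using pos terminals_inj unfolding inj_on_def by (metis lessThan_iff)
  then obtain a b d e where "a < 4" "b < 4" "d < 4" "e < 4"
    and order: "pos a < pos b" "pos b < pos d" "pos d < pos e"
    by (rule inj_on_lessThan_4_increasing)
  moreover have "a \<noteq> b" "a \<noteq> d" "a \<noteq> e" "b \<noteq> d" "b \<noteq> e" "d \<noteq> e" using order by auto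
  moreover have "3 \<le> length es" using \<open>4 \<le> length es\<close> by simp
  ultimately show False
    using terminals_on_cycle_not_interleaved[OF no_overlap c, of a b d e "pos a" "pos b" "pos d" "pos e"]
      pos[of a] pos[of b] pos[of d] pos[of e] by blast
qed

end

lemma overlapping_cycles_if_line_graph_K4_immersion:
  assumes H: "multigraph VH EH ends" and deg: "max_degree VH EH ends < 4"
    and imm: "has_Kt_immersion 4 EH (line_edges EH ends)"
  shows "overlapping_cycles VH EH ends"
proof -
  interpret loopless_multigraph VH EH ends using H by unfold_locales
  have "card {e \<in> EH. w \<in> ends e} \<le> 3" for w
  proof (cases "w \<in> VH")
    case True
    then have "mdegree VH EH ends w \<le> max_degree VH EH ends"
      unfolding max_degree_def using finite_VH by (intro Max_ge) auto
    with deg show ?thesis unfolding mdegree_def by simp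
  next
    case False
    then have empty: "{e \<in> EH. w \<in> ends e} = {}" using ends_subset by blast
    show ?thesis unfolding empty by simp
  qed
  then interpret subcubic_multigraph VH EH ends by unfold_locales
  obtain \<phi> P where "inj_on \<phi> {..<4::nat}"
    "\<forall>i j. i < j \<and> j < (4::nat) \<longrightarrow> is_path (line_edges EH ends) (P i j) (\<phi> i) (\<phi> j)"
    "\<forall>i j i' j'. i < j \<and> j < (4::nat) \<and> i' < j' \<and> j' < 4 \<and> (i, j) \<noteq> (i', j') \<longrightarrow>
      path_edges (P i j) \<inter> path_edges (P i' j') = {}"
    using imm unfolding has_Kt_immersion_def by (elim exE conjE) (rule that)
  then interpret line_graph_K4_immersion VH EH ends \<phi> P by unfold_locales blast+
  show ?thesis by (rule K4_immersion_overlapping_cycles)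
qed

lemma line_graph_K4_criterion:
  assumes "is_line_graph_of V E VH ends"
  shows "has_Kt_immersion 4 V E \<longleftrightarrow> 4 \<le> max_degree VH V ends \<or> overlapping_cycles VH V ends"
    and "has_Kt_minor 4 V E \<longleftrightarrow> 4 \<le> max_degree VH V ends \<or> overlapping_cycles VH V ends"
proof -
  have H: "multigraph VH V ends" and E: "E = line_edges V ends"
    using assms unfolding is_line_graph_of_def by auto
  interpret loopless_multigraph VH V ends using H by unfold_locales
  have "has_Kt_immersion 4 V E \<Longrightarrow> 4 \<le> max_degree VH V ends \<or> overlapping_cycles VH V ends"
    using overlapping_cycles_if_line_graph_K4_immersion[OF H] E by (metis not_le)
  moreover have "4 \<le> max_degree VH V ends \<or> overlapping_cycles VH V ends \<Longrightarrow> has_Kt_minor 4 V E"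
    using line_graph_K4_minor_if_degree_ge_4 line_graph_K4_minor_if_overlapping_cycles E by blast
  ultimately show "has_Kt_immersion 4 V E \<longleftrightarrow> 4 \<le> max_degree VH V ends \<or> overlapping_cycles VH V ends"
    and "has_Kt_minor 4 V E \<longleftrightarrow> 4 \<le> max_degree VH V ends \<or> overlapping_cycles VH V ends"
    using has_K4_immersion_if_has_K4_minor by blast+
qed

theorem theorem4p2:
  fixes V :: "'a set" and E :: "'a set set"
  assumes "simple_graph V E" and "is_line_graph V E"
  shows "(has_Kt_immersion 4 V E \<longleftrightarrow> has_Kt_minor 4 V E) \<and>
         (has_Kt_minor 4 V E \<longleftrightarrow>
           (\<forall>VH ends. is_line_graph_of V E VH ends \<longrightarrow>
              max_degree VH V ends \<ge> 4 \<or>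
              (\<exists>C1 C2. is_cycle VH V ends C1 \<and> is_cycle VH V ends C2 \<and> C1 \<noteq> C2 \<and>
                 C1 \<inter> C2 \<noteq> {} \<and> (card C1 \<noteq> 2 \<or> card C2 \<noteq> 2))))"
proof -
  obtain VH ends where L: "is_line_graph_of V E VH ends"
    using assms(2) unfolding is_line_graph_def by blast
  have "has_Kt_minor 4 V E \<longleftrightarrow>
      (\<forall>VH ends. is_line_graph_of V E VH ends \<longrightarrow> 4 \<le> max_degree VH V ends \<or> overlapping_cycles VH V ends)"
    using line_graph_K4_criterion(2) L by blast
  then show ?thesis
    using line_graph_K4_criterion[OF L] unfolding overlapping_cycles_def by simp
qed

end
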